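(* Let $k\ge1$ and $n$ be integers with $2k+1\le n$, let $m=n-k$, and let $\pi_{n,k}:=[1,\ldots,k,\,n-k,\,n-k-1,\ldots,k+1]\in\mathfrak{S}_{m}$. Identify the diagonal $\overline{ij}\in\Gamma_{n,k}$ ($i<j$) with the box in row $a=n+1-j$ and column $b=i$ of the staircase $\{(a,b): a,b\ge1,\ a+b\le m\}$; this identifies $\Gamma_{n,k}$ with the set of boxes $(a,b)$ with $k+2\le a+b\le m$. Then the map sending a $k$-triangulation $T$ of the $n$-gon to the pipe dream of size $m$ whose crossing tiles are exactly the boxes corresponding to the diagonals in $\Gamma_{n,k}\setminus T$ (all other boxes, i.e. those corresponding to diagonals of $T$ and those with $a+b\le k+1$, being elbow tiles) is a bijection between $k$-triangulations of the $n$-gon and reduced pipe dreams for $\pi_{n,k}$.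
   Context: Label the vertices of a convex $n$-gon by $1,\ldots,n$ in cyclic order, and write $\overline{ij}$ for the segment joining $i$ and $j$. Set $\Gamma_{n,k}:=\{\overline{ij}: k<|i-j|<n-k\}$. A $(k+1)$-crossing is a set of $k+1$ diagonals which mutually cross. A $k$-triangulation is a maximal subset of $\Gamma_{n,k}$ containing no $(k+1)$-crossing. A pipe dream of size $m$ is a filling of each box $(a,b)$ (row $a$ from the top, column $b$ from the left) of the staircase $\{(a,b):a,b\ge1, a+b\le m\}$ with either a crossing tile (two pipes crossing) or an elbow tile (two turning pipes, one connecting the top to the left edge, one connecting the bottom to the right edge), with an elbow half-tile joining the right and bottom edges of each position $(a,b)$ with $a+b=m+1$. Pipes enter at the top of the columns $1,\ldots,m$ and exit at the left of the rows $1,\ldots,m$; the permutation $\pi(D)$ of the pipe dream $D$ is read off by recording at the left end of each row the column number where the pipe ending there entered, and reading these labels from top to bottom. $D$ is reduced if any two pipes cross at most once. A reduced pipe dream for $\pi$ is a reduced pipe dream $D$ with $\pi(D)=\pi$. *)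

theory Defs
  imports Main
begin

definition Gamma :: "nat \<Rightarrow> nat \<Rightarrow> (nat \<times> nat) set" where
  "Gamma n k = {(i, j). 1 \<le> i \<and> i < j \<and> j \<le> n \<and> k < j - i \<and> j - i < n - k}"

text \<open>Two segments (i,j), (i',j') with endpoints on a convex polygon cross
  (in their interiors) iff their endpoints strictly interlace.\<close>

definition crosses :: "nat \<times> nat \<Rightarrow> nat \<times> nat \<Rightarrow> bool" where
  "crosses e f = (case e of (i, j) \<Rightarrow> case f of (i', j') \<Rightarrow>
      (i < i' \<and> i' < j \<and> j < j') \<or> (i' < i \<and> i < j' \<and> j' < j))"

definition is_crossing :: "nat \<Rightarrow> (nat \<times> nat) set \<Rightarrow> bool" where
  "is_crossing r C = (card C = r \<and> (\<forall>e\<in>C. \<forall>f\<in>C. e \<noteq> f \<longrightarrow> crosses e f))"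

definition contains_crossing :: "nat \<Rightarrow> (nat \<times> nat) set \<Rightarrow> bool" where
  "contains_crossing r S = (\<exists>C. C \<subseteq> S \<and> is_crossing r C)"

definition k_triangulation :: "nat \<Rightarrow> nat \<Rightarrow> (nat \<times> nat) set \<Rightarrow> bool" where
  "k_triangulation n k T =
     (T \<subseteq> Gamma n k \<and> \<not> contains_crossing (k + 1) T \<and>
      (\<forall>T'. T \<subset> T' \<and> T' \<subseteq> Gamma n k \<longrightarrow> contains_crossing (k + 1) T'))"

definition staircase :: "nat \<Rightarrow> (nat \<times> nat) set" where
  "staircase m = {(a, b). 1 \<le> a \<and> 1 \<le> b \<and> a + b \<le> m}"

text \<open>A pipe dream of size m is encoded by the set D \<subseteq> staircase m of its
  crossing tiles (all other boxes of the staircase are elbows).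
  A pipe position is (a, b, fromTop): the pipe is entering box (a,b) through
  its top edge (fromTop = True) or through its right edge (fromTop = False).
  Column b = 0 means the pipe has exited at the left end of row a.
  On the antidiagonal a + b = m + 1 the half elbow turns a pipe coming from
  above to the left.\<close>

definition pd_step :: "nat \<Rightarrow> (nat \<times> nat) set \<Rightarrow> nat \<times> nat \<times> bool \<Rightarrow> nat \<times> nat \<times> bool" where
  "pd_step m D s = (case s of (a, b, fromtop) \<Rightarrow>
     if b = 0 then (a, b, fromtop)
     else if fromtop then
       (if a + b = m + 1 \<or> (a, b) \<notin> D then (a, b - 1, False) else (a + 1, b, True))
     else
       (if (a, b) \<in> D then (a, b - 1, False) else (a + 1, b, True)))"

definition pipe_visits :: "nat \<Rightarrow> (nat \<times> nat) set \<Rightarrow> nat \<Rightarrow> nat \<times> nat \<times> bool \<Rightarrow> bool" where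
  "pipe_visits m D c s = (\<exists>t. (pd_step m D ^^ t) (1, c, True) = s)"

definition exit_row :: "nat \<Rightarrow> (nat \<times> nat) set \<Rightarrow> nat \<Rightarrow> nat" where
  "exit_row m D c = (THE a. pipe_visits m D c (a, 0, False))"

definition pd_perm :: "nat \<Rightarrow> (nat \<times> nat) set \<Rightarrow> nat list" where
  "pd_perm m D = map (\<lambda>a. THE c. 1 \<le> c \<and> c \<le> m \<and> exit_row m D c = a) [1..<m + 1]"

definition crossing_boxes :: "nat \<Rightarrow> (nat \<times> nat) set \<Rightarrow> nat \<Rightarrow> nat \<Rightarrow> (nat \<times> nat) set" where
  "crossing_boxes m D c c' = {(a, b). (a, b) \<in> D \<and>
      ((pipe_visits m D c (a, b, True) \<and> pipe_visits m D c' (a, b, False)) \<or>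
       (pipe_visits m D c' (a, b, True) \<and> pipe_visits m D c (a, b, False)))}"

definition reduced_pd :: "nat \<Rightarrow> (nat \<times> nat) set \<Rightarrow> bool" where
  "reduced_pd m D = (D \<subseteq> staircase m \<and>
     (\<forall>c c'. 1 \<le> c \<and> c < c' \<and> c' \<le> m \<longrightarrow> card (crossing_boxes m D c c') \<le> 1))"

definition reduced_pd_for :: "nat \<Rightarrow> nat list \<Rightarrow> (nat \<times> nat) set \<Rightarrow> bool" where
  "reduced_pd_for m \<pi> D = (reduced_pd m D \<and> pd_perm m D = \<pi>)"

definition pi_nk :: "nat \<Rightarrow> nat \<Rightarrow> nat list" where
  "pi_nk n k = [1..<k + 1] @ rev [k + 1..<n - k + 1]"

definition box_of :: "nat \<Rightarrow> nat \<times> nat \<Rightarrow> nat \<times> nat" where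
  "box_of n e = (case e of (i, j) \<Rightarrow> (n + 1 - j, i))"

definition pd_of_triang :: "nat \<Rightarrow> nat \<Rightarrow> (nat \<times> nat) set \<Rightarrow> (nat \<times> nat) set" where
  "pd_of_triang n k T = box_of n ` (Gamma n k - T)"

end

theory Submission
  imports Defs "HOL-Library.Product_Lexorder"
begin

text \<open>Processing the boxes row by row, the labels of the pipes crossing the boundary of the
  processed region form a permutation which changes by an adjacent transposition at each
  crossing. Hence two pipes are inverted iff they crossed an odd number of times, and a pipe
  dream is reduced iff at each crossing the pipe from above has the smaller label. For a set
  \<open>U\<close> of boxes, the pipe dream inside \<open>U\<close> that crosses exactly where this keeps it reduced has
  a rank function given by a recursion on \<open>U\<close> and antitone in \<open>U\<close>.

  A \<open>(k + 1)\<close>-crossing of diagonals is a north-east chain of \<open>k + 1\<close> boxes. If the complement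
  of a reduced pipe dream for \<open>\<pi>\<^sub>n\<^sub>,\<^sub>k\<close> contained such a chain, the rank function would exceed
  that of \<open>\<pi>\<^sub>n\<^sub>,\<^sub>k\<close>; conversely, if a set of diagonals has no \<open>(k + 1)\<close>-crossing, the rank
  bound forces the greedy pipe dream in its complement to realise \<open>\<pi>\<^sub>n\<^sub>,\<^sub>k\<close>. As all reduced
  pipe dreams for \<open>\<pi>\<^sub>n\<^sub>,\<^sub>k\<close> have the same number of crossings, maximal crossing free sets
  correspond exactly to reduced pipe dreams.\<close>

section \<open>Tracing pipes backwards\<close>

text \<open>\<open>pipe_label m D a b True\<close> is the column in which the pipe crossing the top edge of box
  \<open>(a, b)\<close> entered, \<open>pipe_label m D a b False\<close> that of the pipe crossing its right edge
  (\<open>0\<close> outside the staircase); it is computed by following the pipe backwards.\<close>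

function pipe_label :: "nat \<Rightarrow> (nat \<times> nat) set \<Rightarrow> nat \<Rightarrow> nat \<Rightarrow> bool \<Rightarrow> nat" where
  "pipe_label m D a b True =
     (if a \<le> 1 then b
      else if (a - 1, b) \<in> D then pipe_label m D (a - 1) b True
      else pipe_label m D (a - 1) b False)"
| "pipe_label m D a b False =
     (if m < a + b then 0
      else if (a, b + 1) \<in> D then pipe_label m D a (b + 1) False
      else pipe_label m D a (b + 1) True)"
  by pat_completeness auto
termination
  by (relation "measure (\<lambda>(m, D, a, b, ft). 2 * a + 2 * (m + 1 - b) + (if ft then 1 else 0))") auto

declare pipe_label.simps [simp del]

lemma pipe_label_first_row: "a \<le> 1 \<Longrightarrow> pipe_label m D a b True = b"
  by (simp add: pipe_label.simps)

lemma pipe_label_top_cross: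
  "2 \<le> a \<Longrightarrow> (a - 1, b) \<in> D \<Longrightarrow> pipe_label m D a b True = pipe_label m D (a - 1) b True"
  by (simp add: pipe_label.simps)

lemma pipe_label_top_elbow:
  "2 \<le> a \<Longrightarrow> (a - 1, b) \<notin> D \<Longrightarrow> pipe_label m D a b True = pipe_label m D (a - 1) b False"
  by (simp add: pipe_label.simps)

lemma pipe_label_right_cross:
  "a + b \<le> m \<Longrightarrow> (a, b + 1) \<in> D \<Longrightarrow> pipe_label m D a b False = pipe_label m D a (b + 1) False"
  by (simp add: pipe_label.simps)

lemma pipe_label_right_elbow:
  "a + b \<le> m \<Longrightarrow> (a, b + 1) \<notin> D \<Longrightarrow> pipe_label m D a b False = pipe_label m D a (b + 1) True"
  by (simp add: pipe_label.simps)

definition valid_state :: "nat \<Rightarrow> nat \<times> nat \<times> bool \<Rightarrow> bool" where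
  "valid_state m s = (case s of (a, b, ft) \<Rightarrow>
     1 \<le> a \<and> (if ft then 1 \<le> b \<and> a + b \<le> m + 1 else a + b \<le> m))"

locale pipe_dream =
  fixes m :: nat and D :: "(nat \<times> nat) set"
  assumes D_staircase: "D \<subseteq> staircase m" and m_pos: "1 \<le> m"
begin

abbreviation L where "L a b ft \<equiv> pipe_label m D a b ft"

lemma box_in_staircase: "(a, b) \<in> D \<Longrightarrow> 1 \<le> a \<and> 1 \<le> b \<and> a + b \<le> m"
  using D_staircase by (auto simp: staircase_def)

lemma finite_D: "finite D"
proof (rule finite_subset)
  show "D \<subseteq> {0..m} \<times> {0..m}" using D_staircase by (auto simp: staircase_def)
qed simp

lemma valid_state_pd_step: "valid_state m s \<Longrightarrow> valid_state m (pd_step m D s)"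
proof -
  assume v: "valid_state m s"
  obtain a b ft where s: "s = (a, b, ft)" by (metis prod_cases3)
  show ?thesis using v box_in_staircase[of a b] unfolding s valid_state_def pd_step_def
    by (cases ft) auto
qed

lemma pipe_label_pd_step:
  assumes v: "valid_state m (a, b, ft)" and b: "b \<noteq> 0"
  shows "case pd_step m D (a, b, ft) of (a', b', ft') \<Rightarrow> L a' b' ft' = L a b ft"
proof (cases ft)
  case True
  show ?thesis
  proof (cases "a + b = m + 1 \<or> (a, b) \<notin> D")
    case c: True
    then have "(a, b) \<notin> D" using box_in_staircase by fastforce
    then show ?thesis using v b True c pipe_label_right_elbow[of a "b - 1" m D]
      by (auto simp: pd_step_def valid_state_def)
  next
    case c: False
    then show ?thesis using v b True pipe_label_top_cross[of "a + 1" b D m]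
      by (auto simp: pd_step_def valid_state_def)
  qed
next
  case False
  then show ?thesis
    using v b pipe_label_right_cross[of a "b - 1" m D] pipe_label_top_elbow[of "a + 1" b D m]
    by (cases "(a, b) \<in> D") (auto simp: pd_step_def valid_state_def)
qed

lemma valid_state_funpow: "valid_state m s \<Longrightarrow> valid_state m ((pd_step m D ^^ t) s)"
  by (induction t) (auto intro: valid_state_pd_step)

lemma pipe_label_funpow:
  assumes "valid_state m (a, b, ft)" and "(pd_step m D ^^ t) (a, b, ft) = (a', b', ft')"
  shows "L a' b' ft' = L a b ft"
  using assms(2)
proof (induction t arbitrary: a' b' ft')
  case (Suc t)
  obtain a1 b1 ft1 where e: "(pd_step m D ^^ t) (a, b, ft) = (a1, b1, ft1)"
    by (metis prod_cases3)
  have v: "valid_state m (a1, b1, ft1)" using valid_state_funpow[OF assms(1), of t] e by simp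
  have step: "pd_step m D (a1, b1, ft1) = (a', b', ft')" using Suc.prems e by simp
  have "L a' b' ft' = L a1 b1 ft1"
  proof (cases "b1 = 0")
    case True then show ?thesis using step by (simp add: pd_step_def)
  next
    case False then show ?thesis using pipe_label_pd_step[OF v] step by simp
  qed
  then show ?case using Suc.IH[OF e] by simp
qed simp

lemma pipe_visits_imp_label:
  assumes "1 \<le> c" "c \<le> m" "pipe_visits m D c (a, b, ft)"
  shows "L a b ft = c \<and> valid_state m (a, b, ft)"
proof -
  obtain t where t: "(pd_step m D ^^ t) (1, c, True) = (a, b, ft)"
    using assms(3) unfolding pipe_visits_def by blast
  have v: "valid_state m (1, c, True)" using assms by (simp add: valid_state_def)
  show ?thesis
    using pipe_label_funpow[OF v t] valid_state_funpow[OF v, of t] t pipe_label_first_row[of 1 m D c]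
    by simp
qed

lemma pipe_visits_pd_step: "pipe_visits m D c s \<Longrightarrow> pipe_visits m D c (pd_step m D s)"
  unfolding pipe_visits_def by (metis funpow.simps(2) comp_apply)

lemma label_imp_pipe_visits:
  "valid_state m (a, b, ft) \<Longrightarrow> L a b ft = c \<Longrightarrow> pipe_visits m D c (a, b, ft)"
proof (induction "2 * a + 2 * (m + 1 - b) + (if ft then 1 else 0)" arbitrary: a b ft
    rule: less_induct)
  case less
  show ?case
  proof (cases ft)
    case True
    show ?thesis
    proof (cases "a \<le> 1")
      case True
      then show ?thesis using less.prems \<open>ft\<close> pipe_label_first_row[of a m D b]
        unfolding pipe_visits_def by (auto simp: valid_state_def intro: exI[of _ 0])
    next
      case False
      define ft' where "ft' = ((a - 1, b) \<in> D)"
      have v: "valid_state m (a - 1, b, ft')"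
        using less.prems \<open>ft\<close> False box_in_staircase by (auto simp: valid_state_def ft'_def)
      have "L (a - 1) b ft' = c"
        using less.prems \<open>ft\<close> False pipe_label_top_cross[of a b D m] pipe_label_top_elbow[of a b D m]
        by (cases ft') (auto simp: ft'_def)
      then have "pipe_visits m D c (a - 1, b, ft')"
        using less.hyps[OF _ v] False \<open>ft\<close> by (cases ft') auto
      moreover have "pd_step m D (a - 1, b, ft') = (a, b, True)"
        using False v less.prems \<open>ft\<close> box_in_staircase[of "a - 1" b]
        by (auto simp: pd_step_def valid_state_def ft'_def)
      ultimately show ?thesis using \<open>ft\<close> pipe_visits_pd_step by fastforce
    qed
  next
    case False
    define ft' where "ft' = ((a, b + 1) \<notin> D)"
    have ab: "a + b \<le> m" using less.prems False by (simp add: valid_state_def)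
    have v: "valid_state m (a, b + 1, ft')"
      using less.prems ab box_in_staircase[of a "b + 1"] by (auto simp: valid_state_def ft'_def)
    have "L a (b + 1) ft' = c"
      using less.prems False ab pipe_label_right_cross[of a b m D] pipe_label_right_elbow[of a b m D]
      by (cases ft') (auto simp: ft'_def)
    then have "pipe_visits m D c (a, b + 1, ft')"
      using less.hyps[OF _ v] ab False by (cases ft') auto
    moreover have "pd_step m D (a, b + 1, ft') = (a, b, False)"
      by (auto simp: pd_step_def ft'_def)
    ultimately show ?thesis using False pipe_visits_pd_step by fastforce
  qed
qed

lemma pipe_visits_iff_label:
  "1 \<le> c \<Longrightarrow> c \<le> m \<Longrightarrow> valid_state m (a, b, ft) \<Longrightarrow>
   pipe_visits m D c (a, b, ft) \<longleftrightarrow> L a b ft = c"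
  using pipe_visits_imp_label label_imp_pipe_visits by blast

end

section \<open>Cuts through the staircase\<close>

definition adj_swap :: "nat \<Rightarrow> nat \<Rightarrow> nat" where
  "adj_swap g p = (if p = g then g + 1 else if p = g + 1 then g else p)"

lemma adj_swap_adj_swap [simp]: "adj_swap g (adj_swap g p) = p"
  by (simp add: adj_swap_def)

lemma adj_swap_range: "1 \<le> g \<Longrightarrow> g + 1 \<le> m \<Longrightarrow> p \<in> {1..m} \<Longrightarrow> adj_swap g p \<in> {1..m}"
  by (auto simp: adj_swap_def)

lemma bij_adj_swap: "1 \<le> g \<Longrightarrow> g + 1 \<le> m \<Longrightarrow> bij_betw (adj_swap g) {1..m} {1..m}"
  by (rule bij_betw_byWitness[where f' = "adj_swap g"]) (auto simp: adj_swap_def)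

lemma adj_swap_strict_mono:
  "p < p' \<Longrightarrow> \<not> (p = g \<and> p' = g + 1) \<Longrightarrow> adj_swap g p < adj_swap g p'"
  by (auto simp: adj_swap_def)

lemma adj_swap_image: "1 \<le> g \<Longrightarrow> g + 1 \<le> P \<or> P < g \<Longrightarrow> adj_swap g ` {1..P} = {1..P}"
  by (rule set_eqI) (auto simp: adj_swap_def image_iff)

context pipe_dream
begin

text \<open>The boxes are processed row by row from the top, each row from right to left. Just
  after box \<open>(a, b + 1)\<close> has been processed, the cut separating processed from unprocessed
  boxes is crossed, in order, by the left exits of rows \<open>1, \<dots>, a - 1\<close>, the top edges of
  \<open>(a, 1), \<dots>, (a, b)\<close>, the right edge of \<open>(a, b)\<close> and the top edges of row \<open>a + 1\<close>;
  \<open>cut_label a b p\<close> is the label of the pipe at position \<open>p\<close> of this cut.\<close>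

definition cut_label :: "nat \<Rightarrow> nat \<Rightarrow> nat \<Rightarrow> nat" where
  "cut_label a b p =
     (if p < a then L p 0 False
      else if p < a + b then L a (p + 1 - a) True
      else if p = a + b then L a b False
      else L (a + 1) (p - a) True)"

lemma cut_label_top: "1 \<le> b \<Longrightarrow> cut_label a b (a + b - 1) = L a b True"
proof -
  assume "1 \<le> b"
  then have "\<not> a + b - 1 < a" "a + b - 1 < a + b" "a + b - 1 + 1 - a = b" by auto
  then show ?thesis by (simp add: cut_label_def)
qed

lemma cut_label_right: "cut_label a b (a + b) = L a b False"
  by (simp add: cut_label_def)

lemma cut_label_step:
  assumes "1 \<le> a" "1 \<le> b" "a + b \<le> m"
  shows "cut_label a (b - 1) p =
    (if (a, b) \<in> D then cut_label a b (adj_swap (a + b - 1) p) else cut_label a b p)"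
proof -
  consider "p < a + b - 1" | "p = a + b - 1" | "p = a + b" | "a + b < p" by linarith
  then show ?thesis
  proof cases
    case 1
    then show ?thesis using assms by (auto simp: cut_label_def adj_swap_def)
  next
    case 2
    have "\<not> p < a" "\<not> p < a + (b - 1)" "p = a + (b - 1)" using 2 assms by auto
    then have "cut_label a (b - 1) p = L a (b - 1) False" by (simp add: cut_label_def)
    moreover have "adj_swap (a + b - 1) p = a + b" using 2 assms by (simp add: adj_swap_def)
    ultimately show ?thesis
      using 2 assms cut_label_right cut_label_top[OF assms(2)]
        pipe_label_right_cross[of a "b - 1" m D] pipe_label_right_elbow[of a "b - 1" m D]
      by auto
  next
    case 3
    have "\<not> p < a" "\<not> p < a + (b - 1)" "p \<noteq> a + (b - 1)" "p - a = b" using 3 assms by auto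
    then have "cut_label a (b - 1) p = L (a + 1) b True" unfolding cut_label_def by presburger
    moreover have "adj_swap (a + b - 1) p = a + b - 1" using 3 assms by (auto simp: adj_swap_def)
    ultimately show ?thesis
      using 3 assms cut_label_right cut_label_top[OF assms(2)]
        pipe_label_top_cross[of "a + 1" b D m] pipe_label_top_elbow[of "a + 1" b D m]
      by auto
  next
    case 4
    then show ?thesis using assms by (auto simp: cut_label_def adj_swap_def)
  qed
qed

lemma cut_label_next_row:
  assumes "1 \<le> a" "a + 1 \<le> m" "p \<le> m"
  shows "cut_label a 0 p = cut_label (a + 1) (m - a - 1) p"
proof -
  consider "p \<le> a" | "a < p \<and> p < m" | "p = m" using assms by linarith
  then show ?thesis
  proof cases
    case 3
    have "(a + 1, m - a) \<notin> D" using box_in_staircase assms by fastforce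
    then have "L (a + 1) (m - a - 1) False = L (a + 1) (m - a) True"
      using pipe_label_right_elbow[of "a + 1" "m - a - 1" m D] assms by (simp add: Suc_diff_Suc)
    then show ?thesis using 3 assms by (simp add: cut_label_def)
  qed (use assms in \<open>auto simp: cut_label_def\<close>)
qed

lemma cut_label_init: "1 \<le> p \<Longrightarrow> p \<le> m \<Longrightarrow> cut_label 1 (m - 1) p = p"
proof (cases "p = m")
  case True
  have "(1, m) \<notin> D" using box_in_staircase by fastforce
  then have "L 1 (m - 1) False = L 1 m True"
    using pipe_label_right_elbow[of 1 "m - 1" m D] m_pos by simp
  then show ?thesis using True m_pos pipe_label_first_row by (simp add: cut_label_def)
qed (use m_pos pipe_label_first_row in \<open>simp add: cut_label_def\<close>)

lemma cut_label_final: "p \<le> m \<Longrightarrow> cut_label m 0 p = L p 0 False"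
  by (auto simp: cut_label_def)

lemma cut_induct [consumes 2, case_names init step next_row]:
  assumes "1 \<le> a" "a + b \<le> m"
    and init: "P 1 (m - 1)"
    and step: "\<And>a b. 1 \<le> a \<Longrightarrow> 1 \<le> b \<Longrightarrow> a + b \<le> m \<Longrightarrow> P a b \<Longrightarrow> P a (b - 1)"
    and next_row: "\<And>a. 1 \<le> a \<Longrightarrow> a + 1 \<le> m \<Longrightarrow> P a 0 \<Longrightarrow> P (a + 1) (m - a - 1)"
  shows "P a b"
proof -
  have row: "P a' (m - a' - d)" if "d \<le> m - a'" "1 \<le> a'" "P a' (m - a')" for a' d
    using that
  proof (induction d)
    case (Suc d)
    then show ?case using step[of a' "m - a' - d"] by (simp add: diff_diff_add)
  qed simp
  have row_start: "1 \<le> a' \<Longrightarrow> a' \<le> m \<Longrightarrow> P a' (m - a')" for a'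
  proof (induction a' rule: nat_induct_at_least)
    case base
    then show ?case using init by simp
  next
    case (Suc a')
    then have "P a' (m - a' - (m - a'))" using row[of "m - a'" a'] by simp
    then show ?case using next_row[of a'] Suc by simp
  qed
  show ?thesis using row[of "m - a - b" a] row_start[of a] assms(1,2) by simp
qed

lemma bij_cut_label: "1 \<le> a \<Longrightarrow> a + b \<le> m \<Longrightarrow> bij_betw (cut_label a b) {1..m} {1..m}"
proof (induction a b rule: cut_induct)
  case init
  have "bij_betw id {1..m} {1..m}" by simp
  then show ?case using cut_label_init bij_betw_cong[of "{1..m}" "cut_label 1 (m - 1)" id] by auto
next
  case (step a b)
  show ?case
  proof (cases "(a, b) \<in> D")
    case True
    then have "cut_label a (b - 1) = cut_label a b \<circ> adj_swap (a + b - 1)"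
      using cut_label_step[OF step.hyps(1-3)] by auto
    moreover have "bij_betw (cut_label a b \<circ> adj_swap (a + b - 1)) {1..m} {1..m}"
      using bij_betw_trans[OF bij_adj_swap step.IH, of "a + b - 1"] step.hyps by simp
    ultimately show ?thesis by metis
  next
    case False
    then show ?thesis using cut_label_step[OF step.hyps(1-3)] step.IH by simp
  qed
next
  case (next_row a)
  then show ?case
    using bij_betw_cong[of "{1..m}" "cut_label a 0" "cut_label (a + 1) (m - a - 1)"]
      cut_label_next_row[OF next_row.hyps]
    by auto
qed

lemma cut_label_inj:
  "1 \<le> a \<Longrightarrow> a + b \<le> m \<Longrightarrow> p \<in> {1..m} \<Longrightarrow> p' \<in> {1..m} \<Longrightarrow>
   cut_label a b p = cut_label a b p' \<Longrightarrow> p = p'"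
  using bij_cut_label[of a b] unfolding bij_betw_def inj_on_def by blast

lemma cut_label_range:
  "1 \<le> a \<Longrightarrow> a + b \<le> m \<Longrightarrow> p \<in> {1..m} \<Longrightarrow> cut_label a b p \<in> {1..m}"
  using bij_cut_label[of a b] unfolding bij_betw_def by blast

lemma bij_exit_label: "bij_betw (\<lambda>p. L p 0 False) {1..m} {1..m}"
  using bij_cut_label[of m 0] m_pos cut_label_final
    bij_betw_cong[of "{1..m}" "cut_label m 0" "\<lambda>p. L p 0 False"]
  by auto

end

section \<open>Crossings and inversions\<close>

context pipe_dream
begin

definition boxes_before :: "nat \<Rightarrow> nat \<Rightarrow> (nat \<times> nat) set" where
  "boxes_before a b = {x \<in> staircase m. fst x < a \<or> (fst x = a \<and> b < snd x)}"

definition top_label :: "nat \<times> nat \<Rightarrow> nat" where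
  "top_label x = L (fst x) (snd x) True"

definition right_label :: "nat \<times> nat \<Rightarrow> nat" where
  "right_label x = L (fst x) (snd x) False"

definition crossings :: "nat \<Rightarrow> nat \<Rightarrow> (nat \<times> nat) set" where
  "crossings u w =
     {x \<in> D. (top_label x = u \<and> right_label x = w) \<or> (top_label x = w \<and> right_label x = u)}"

lemma crossings_commute: "crossings u w = crossings w u"
  by (auto simp: crossings_def)

lemma finite_crossings: "finite (crossings u w)"
  using finite_D by (simp add: crossings_def)

lemma boxes_before_step:
  "1 \<le> a \<Longrightarrow> 1 \<le> b \<Longrightarrow> a + b \<le> m \<Longrightarrow>
   boxes_before a (b - 1) = insert (a, b) (boxes_before a b) \<and> (a, b) \<notin> boxes_before a b"
  by (auto simp: boxes_before_def staircase_def)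

lemma boxes_before_next_row:
  "1 \<le> a \<Longrightarrow> a + 1 \<le> m \<Longrightarrow> boxes_before a 0 = boxes_before (a + 1) (m - a - 1)"
  by (auto simp: boxes_before_def staircase_def)

lemma boxes_before_init: "boxes_before 1 (m - 1) = {}"
  by (auto simp: boxes_before_def staircase_def)

lemma crossings_subset_boxes_before_final: "crossings u w \<subseteq> boxes_before m 0"
  using D_staircase by (auto simp: crossings_def boxes_before_def staircase_def)

lemma top_right_label_cut:
  "1 \<le> a \<Longrightarrow> 1 \<le> b \<Longrightarrow>
   top_label (a, b) = cut_label a b (a + b - 1) \<and> right_label (a, b) = cut_label a b (a + b)"
  using cut_label_top[of b a] cut_label_right[of a b] by (simp add: top_label_def right_label_def)

lemma top_right_labels:
  assumes "x \<in> staircase m"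
  shows "top_label x \<in> {1..m} \<and> right_label x \<in> {1..m} \<and> top_label x \<noteq> right_label x"
proof -
  obtain a b where x: "x = (a, b)" "1 \<le> a" "1 \<le> b" "a + b \<le> m"
    using assms by (auto simp: staircase_def)
  have r: "a + b - 1 \<in> {1..m}" "a + b \<in> {1..m}" using x by auto
  show ?thesis
    using top_right_label_cut[OF x(2,3)] cut_label_range[OF x(2,4) r(1)] cut_label_range[OF x(2,4) r(2)]
      cut_label_inj[OF x(2,4) r] x by auto
qed

lemma crossings_range:
  assumes "x \<in> crossings u w"
  shows "u \<in> {1..m} \<and> w \<in> {1..m} \<and> u \<noteq> w"
proof -
  have "x \<in> staircase m" using assms D_staircase by (auto simp: crossings_def)
  then show ?thesis using top_right_labels[of x] assms by (auto simp: crossings_def)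
qed

definition cut_parity :: "nat \<Rightarrow> nat \<Rightarrow> bool" where
  "cut_parity a b = (\<forall>p p'. 1 \<le> p \<longrightarrow> p < p' \<longrightarrow> p' \<le> m \<longrightarrow>
      (cut_label a b p' < cut_label a b p \<longleftrightarrow>
       odd (card (crossings (cut_label a b p) (cut_label a b p') \<inter> boxes_before a b))))"

lemma crossings_at_box:
  assumes ab: "1 \<le> a" "1 \<le> b" "a + b \<le> m" and q: "q < q'" "q \<in> {1..m}" "q' \<in> {1..m}"
    and x: "(a, b) \<in> crossings (cut_label a b q) (cut_label a b q')"
  shows "q = a + b - 1 \<and> q' = a + b"
proof -
  define S where "S = cut_label a b"
  have g: "a + b - 1 \<in> {1..m}" "a + b \<in> {1..m}" using ab by auto
  have inj: "p \<in> {1..m} \<Longrightarrow> p' \<in> {1..m} \<Longrightarrow> S p = S p' \<Longrightarrow> p = p'" for p p'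
    using cut_label_inj[OF ab(1,3)] unfolding S_def by blast
  from x have "(S (a + b - 1) = S q \<and> S (a + b) = S q') \<or> (S (a + b - 1) = S q' \<and> S (a + b) = S q)"
    using top_right_label_cut[OF ab(1,2)] by (auto simp: crossings_def S_def)
  then have "(a + b - 1 = q \<and> a + b = q') \<or> (a + b - 1 = q' \<and> a + b = q)"
    using inj[OF g(1) q(2)] inj[OF g(2) q(3)] inj[OF g(1) q(3)] inj[OF g(2) q(2)] by blast
  then show ?thesis using q(1) ab by auto
qed

lemma cut_parity_crossing_step:
  assumes ab: "1 \<le> a" "1 \<le> b" "a + b \<le> m" and x: "(a, b) \<in> D" and parity: "cut_parity a b"
  shows "cut_parity a (b - 1)"
  unfolding cut_parity_def
proof (intro allI impI)
  fix p p' assume pp: "1 \<le> p" "p < p'" "p' \<le> m"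
  define g where "g = a + b - 1"
  define S where "S = cut_label a b"
  have g: "1 \<le> g" "g + 1 \<le> m" "g + 1 = a + b" using ab by (auto simp: g_def)
  have S': "cut_label a (b - 1) p = S (adj_swap g p)" for p
    using cut_label_step[OF ab] x by (simp add: g_def S_def)
  have TR: "top_label (a, b) = S g" "right_label (a, b) = S (g + 1)"
    using top_right_label_cut[OF ab(1,2)] g by (simp_all add: S_def g_def)
  note before = boxes_before_step[OF ab]
  show "cut_label a (b - 1) p' < cut_label a (b - 1) p \<longleftrightarrow>
        odd (card (crossings (cut_label a (b - 1) p) (cut_label a (b - 1) p') \<inter> boxes_before a (b - 1)))"
  proof (cases "p = g \<and> p' = g + 1")
    case True
    \<comment> \<open>the two pipes meeting at \<open>(a, b)\<close> swap and gain one crossing\<close>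
    have "(a, b) \<in> crossings (S g) (S (g + 1))" using TR x by (simp add: crossings_def)
    then have "crossings (S (g + 1)) (S g) \<inter> boxes_before a (b - 1) =
               insert (a, b) (crossings (S g) (S (g + 1)) \<inter> boxes_before a b)"
      using before crossings_commute by auto
    then have "card (crossings (S (g + 1)) (S g) \<inter> boxes_before a (b - 1)) =
               Suc (card (crossings (S g) (S (g + 1)) \<inter> boxes_before a b))"
      using before finite_crossings by simp
    moreover have "S (g + 1) < S g \<longleftrightarrow> odd (card (crossings (S g) (S (g + 1)) \<inter> boxes_before a b))"
      using parity g unfolding cut_parity_def S_def by auto
    moreover have "S g \<noteq> S (g + 1)" using cut_label_inj[OF ab(1,3), of g "g + 1"] g by (auto simp: S_def)
    ultimately show ?thesis using S' True by (auto simp: adj_swap_def)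
  next
    case False
    \<comment> \<open>all other pairs keep their relative order, and \<open>(a, b)\<close> is not a crossing of theirs\<close>
    define q where "q = adj_swap g p"
    define q' where "q' = adj_swap g p'"
    have qq: "q < q'" using adj_swap_strict_mono[OF pp(2) False] by (simp add: q_def q'_def)
    have qr: "q \<in> {1..m}" "q' \<in> {1..m}"
      using adj_swap_range[OF g(1,2), of p] adj_swap_range[OF g(1,2), of p'] pp
      by (auto simp: q_def q'_def)
    have "(a, b) \<notin> crossings (S q) (S q')"
    proof
      assume "(a, b) \<in> crossings (S q) (S q')"
      then have "q = g \<and> q' = g + 1" using crossings_at_box[OF ab qq qr] g by (simp add: S_def g_def)
      then have "p = g + 1 \<and> p' = g" unfolding q_def q'_def by (metis adj_swap_adj_swap adj_swap_def)
      then show False using pp by simp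
    qed
    then have "crossings (S q) (S q') \<inter> boxes_before a (b - 1) = crossings (S q) (S q') \<inter> boxes_before a b"
      using before by auto
    moreover have "S q' < S q \<longleftrightarrow> odd (card (crossings (S q) (S q') \<inter> boxes_before a b))"
      using parity qq qr unfolding cut_parity_def S_def by auto
    ultimately show ?thesis using S' by (simp add: q_def q'_def)
  qed
qed

lemma cut_parity_holds: "1 \<le> a \<Longrightarrow> a + b \<le> m \<Longrightarrow> cut_parity a b"
proof (induction a b rule: cut_induct)
  case init
  show ?case unfolding cut_parity_def using cut_label_init boxes_before_init by simp
next
  case (step a b)
  show ?case
  proof (cases "(a, b) \<in> D")
    case True
    then show ?thesis using cut_parity_crossing_step step by blast
  next
    case False
    then have "crossings u w \<inter> boxes_before a (b - 1) = crossings u w \<inter> boxes_before a b" for u w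
      using boxes_before_step[OF step.hyps(1-3)] by (auto simp: crossings_def)
    then show ?thesis
      using step.IH cut_label_step[OF step.hyps(1-3)] False by (simp add: cut_parity_def)
  qed
next
  case (next_row a)
  then show ?case
    using cut_label_next_row[OF next_row.hyps] boxes_before_next_row[OF next_row.hyps]
    unfolding cut_parity_def by simp
qed

lemma box_label_parity:
  assumes "1 \<le> a" "1 \<le> b" "a + b \<le> m"
  shows "right_label (a, b) < top_label (a, b) \<longleftrightarrow>
    odd (card (crossings (top_label (a, b)) (right_label (a, b)) \<inter> boxes_before a b))"
proof -
  have "1 \<le> a + b - 1" "a + b - 1 < a + b" using assms by auto
  with cut_parity_holds[OF assms(1,3)] have
    "cut_label a b (a + b) < cut_label a b (a + b - 1) \<longleftrightarrow>
     odd (card (crossings (cut_label a b (a + b - 1)) (cut_label a b (a + b)) \<inter> boxes_before a b))"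
    unfolding cut_parity_def using assms(3) by blast
  then show ?thesis using top_right_label_cut[OF assms(1,2)] by simp
qed

lemma exit_label_parity:
  assumes "1 \<le> p" "p < p'" "p' \<le> m"
  shows "L p' 0 False < L p 0 False \<longleftrightarrow> odd (card (crossings (L p 0 False) (L p' 0 False)))"
  using cut_parity_holds[of m 0] m_pos assms cut_label_final crossings_subset_boxes_before_final
  unfolding cut_parity_def by (simp add: Int_absorb2)

lemma crossing_boxes_eq_crossings:
  assumes "1 \<le> c" "c \<le> m" "1 \<le> c'" "c' \<le> m"
  shows "crossing_boxes m D c c' = crossings c c'"
proof -
  have "(a, b) \<in> D \<Longrightarrow> valid_state m (a, b, True) \<and> valid_state m (a, b, False)" for a b
    using box_in_staircase[of a b] by (simp add: valid_state_def)
  then show ?thesis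
    unfolding crossing_boxes_def crossings_def top_label_def right_label_def
    using pipe_visits_iff_label[OF assms(1,2)] pipe_visits_iff_label[OF assms(3,4)] by fastforce
qed

lemma reduced_pd_iff_crossings: "reduced_pd m D \<longleftrightarrow> (\<forall>u w. card (crossings u w) \<le> 1)"
proof
  assume r: "reduced_pd m D"
  show "\<forall>u w. card (crossings u w) \<le> 1"
  proof (intro allI)
    fix u w
    show "card (crossings u w) \<le> 1"
    proof (cases "u \<in> {1..m} \<and> w \<in> {1..m} \<and> u \<noteq> w")
      case False
      then have "crossings u w = {}" using crossings_range by blast
      then show ?thesis by simp
    next
      case True
      then consider "1 \<le> u" "u < w" "w \<le> m" | "1 \<le> w" "w < u" "u \<le> m" by force
      then show ?thesis
      proof cases
        case 1
        then have "card (crossing_boxes m D u w) \<le> 1" using r unfolding reduced_pd_def by blast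
        then show ?thesis using crossing_boxes_eq_crossings[of u w] 1 by simp
      next
        case 2
        then have "card (crossing_boxes m D w u) \<le> 1" using r unfolding reduced_pd_def by blast
        then show ?thesis using crossing_boxes_eq_crossings[of w u] crossings_commute[of u w] 2 by simp
      qed
    qed
  qed
next
  assume "\<forall>u w. card (crossings u w) \<le> 1"
  then show "reduced_pd m D"
    unfolding reduced_pd_def using D_staircase crossing_boxes_eq_crossings by simp
qed

text \<open>If the pipe from the right had the smaller label, the two pipes meeting at \<open>x\<close> would
  already be inverted, hence would have crossed before \<open>x\<close>.\<close>

lemma reduced_top_label_less:
  assumes "reduced_pd m D" and x: "x \<in> D"
  shows "top_label x < right_label x"
proof (rule ccontr)
  obtain a b where xe: "x = (a, b)" and ab: "1 \<le> a" "1 \<le> b" "a + b \<le> m"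
    using box_in_staircase x by (cases x) auto
  define C where "C = crossings (top_label x) (right_label x)"
  assume "\<not> top_label x < right_label x"
  then have "right_label x < top_label x" using top_right_labels D_staircase x by fastforce
  then have "odd (card (C \<inter> boxes_before a b))" using box_label_parity[OF ab] xe by (simp add: C_def)
  then have "C \<inter> boxes_before a b \<noteq> {}" by (metis card.empty even_zero)
  then obtain y where y: "y \<in> C" "y \<in> boxes_before a b" by blast
  have "x \<notin> boxes_before a b" using boxes_before_step[OF ab] xe by simp
  moreover have "x \<in> C" using x by (simp add: crossings_def C_def)
  ultimately have "card {x, y} \<le> card C" using y finite_crossings card_mono[of C "{x, y}"]
    by (auto simp: C_def)
  moreover have "card C \<le> 1" using assms(1) reduced_pd_iff_crossings C_def by blast
  ultimately show False using y \<open>x \<notin> boxes_before a b\<close> by (cases "x = y") auto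
qed

lemma ordered_imp_card_crossings_le_1:
  assumes ordered: "\<forall>x\<in>D. top_label x < right_label x"
  shows "card (crossings u w) \<le> 1"
proof -
  have "1 \<le> a \<Longrightarrow> a + b \<le> m \<Longrightarrow> \<forall>u w. card (crossings u w \<inter> boxes_before a b) \<le> 1" for a b
  proof (induction a b rule: cut_induct)
    case init then show ?case using boxes_before_init by simp
  next
    case (step a b)
    note before = boxes_before_step[OF step.hyps(1-3)]
    show ?case
    proof (intro allI)
      fix u w
      show "card (crossings u w \<inter> boxes_before a (b - 1)) \<le> 1"
      proof (cases "(a, b) \<in> crossings u w")
        case False
        then have "crossings u w \<inter> boxes_before a (b - 1) = crossings u w \<inter> boxes_before a b"
          using before by auto
        then show ?thesis using step.IH by simp
      next
        case True
        define C where "C = crossings (top_label (a, b)) (right_label (a, b))"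
        have "(a, b) \<in> D" using True by (simp add: crossings_def)
        then have "\<not> odd (card (C \<inter> boxes_before a b))"
          using box_label_parity[OF step.hyps] ordered C_def by auto
        moreover have "card (C \<inter> boxes_before a b) \<le> 1" using step.IH C_def by blast
        ultimately have "card (C \<inter> boxes_before a b) = 0" by (metis le_SucE le_zero_eq odd_one One_nat_def)
        then have "C \<inter> boxes_before a b = {}" using finite_crossings by (simp add: C_def)
        moreover have "crossings u w = C" using True by (auto simp: crossings_def C_def)
        ultimately show ?thesis using before True by auto
      qed
    qed
  next
    case (next_row a)
    then show ?case using boxes_before_next_row by simp
  qed
  from this[of m 0] have "card (crossings u w \<inter> boxes_before m 0) \<le> 1" using m_pos by simp
  then show ?thesis using crossings_subset_boxes_before_final by (simp add: Int_absorb2)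
qed

lemma reduced_pd_iff_ordered: "reduced_pd m D \<longleftrightarrow> (\<forall>x\<in>D. top_label x < right_label x)"
  using reduced_top_label_less ordered_imp_card_crossings_le_1 reduced_pd_iff_crossings by blast

lemma exit_row_eq:
  assumes a: "1 \<le> a" "a \<le> m" and c: "1 \<le> c" "c \<le> m" and exit: "L a 0 False = c"
  shows "exit_row m D c = a"
  unfolding exit_row_def
proof (rule the_equality)
  show "pipe_visits m D c (a, 0, False)"
    using pipe_visits_iff_label[OF c] a exit by (simp add: valid_state_def)
next
  fix a' assume "pipe_visits m D c (a', 0, False)"
  from pipe_visits_imp_label[OF c this] have "L a' 0 False = c" "a' \<in> {1..m}"
    by (auto simp: valid_state_def)
  moreover have "a \<in> {1..m}" using a by simp
  ultimately show "a' = a" using bij_exit_label exit unfolding bij_betw_def inj_on_def by metis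
qed

lemma pd_perm_eq: "pd_perm m D = map (\<lambda>a. L a 0 False) [1..<m + 1]"
proof -
  have "(THE c. 1 \<le> c \<and> c \<le> m \<and> exit_row m D c = a) = L a 0 False"
    if "a \<in> set [1..<m + 1]" for a
  proof (rule the_equality)
    from that have that: "1 \<le> a" "a \<le> m" by auto
    have "L a 0 False \<in> {1..m}" using bij_exit_label that unfolding bij_betw_def by auto
    then show "1 \<le> L a 0 False \<and> L a 0 False \<le> m \<and> exit_row m D (L a 0 False) = a"
      using exit_row_eq[OF that _ _ refl] by auto
  next
    fix c assume c: "1 \<le> c \<and> c \<le> m \<and> exit_row m D c = a"
    then have "c \<in> (\<lambda>p. L p 0 False) ` {1..m}"
      using bij_betw_imp_surj_on[OF bij_exit_label] by simp
    then obtain a' where "a' \<in> {1..m}" "L a' 0 False = c" by blast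
    then show "c = L a 0 False" using exit_row_eq[of a' c] c by auto
  qed
  then show ?thesis unfolding pd_perm_def by simp
qed

definition exit_inversions :: "(nat \<times> nat) set" where
  "exit_inversions = {(L p' 0 False, L p 0 False) | p p'.
     1 \<le> p \<and> p < p' \<and> p' \<le> m \<and> L p' 0 False < L p 0 False}"

lemma crossing_exit_inversion:
  assumes "reduced_pd m D" and x: "x \<in> D"
  shows "(top_label x, right_label x) \<in> exit_inversions"
proof -
  define u where "u = top_label x"
  define w where "w = right_label x"
  have uw: "u < w" "u \<in> {1..m}" "w \<in> {1..m}"
    using reduced_top_label_less[OF assms] top_right_labels[OF subsetD[OF D_staircase x]]
    by (auto simp: u_def w_def)
  have "card (crossings u w) \<le> 1" using assms(1) reduced_pd_iff_crossings by blast
  moreover have "x \<in> crossings u w" using x by (simp add: crossings_def u_def w_def)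
  ultimately have one: "card (crossings u w) = 1"
    using finite_crossings card_0_eq[of "crossings u w"] by fastforce
  have "u \<in> (\<lambda>p. L p 0 False) ` {1..m}" "w \<in> (\<lambda>p. L p 0 False) ` {1..m}"
    using bij_betw_imp_surj_on[OF bij_exit_label] uw by simp_all
  then obtain pu pw where p: "pu \<in> {1..m}" "L pu 0 False = u" "pw \<in> {1..m}" "L pw 0 False = w"
    by blast
  have "\<not> pu < pw" using exit_label_parity[of pu pw] p one uw by auto
  moreover have "pu \<noteq> pw" using p uw by auto
  ultimately have "pw < pu" by simp
  then show ?thesis unfolding exit_inversions_def using p uw
    by (intro CollectI exI[of _ pw] exI[of _ pu]) (auto simp: u_def w_def)
qed

lemma reduced_card_eq_exit_inversions:
  assumes "reduced_pd m D"
  shows "card D = card exit_inversions"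
proof -
  define f where "f x = (top_label x, right_label x)" for x
  have "inj_on f D"
  proof (rule inj_onI)
    fix x y assume xy: "x \<in> D" "y \<in> D" "f x = f y"
    then have "{x, y} \<subseteq> crossings (top_label x) (right_label x)" by (auto simp: crossings_def f_def)
    then have "card {x, y} \<le> 1"
      using assms reduced_pd_iff_crossings card_mono[OF finite_crossings] le_trans by metis
    then show "x = y" by (cases "x = y") auto
  qed
  moreover have "f ` D = exit_inversions"
  proof
    show "f ` D \<subseteq> exit_inversions" using crossing_exit_inversion[OF assms] by (auto simp: f_def)
  next
    show "exit_inversions \<subseteq> f ` D"
    proof
      fix z assume "z \<in> exit_inversions"
      then obtain p p' where pp: "1 \<le> p" "p < p'" "p' \<le> m" "L p' 0 False < L p 0 False"
        "z = (L p' 0 False, L p 0 False)" unfolding exit_inversions_def by blast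
      then have "odd (card (crossings (L p 0 False) (L p' 0 False)))" using exit_label_parity by simp
      then obtain x where x: "x \<in> crossings (L p 0 False) (L p' 0 False)"
        by (metis card.empty even_zero ex_in_conv)
      then have "x \<in> D" by (simp add: crossings_def)
      then have "top_label x < right_label x" using reduced_top_label_less[OF assms] by blast
      then have "f x = z" using x pp by (auto simp: crossings_def f_def)
      then show "z \<in> f ` D" using \<open>x \<in> D\<close> by blast
    qed
  qed
  ultimately show ?thesis using card_image by fastforce
qed

end

section \<open>Rank functions of cuts\<close>

definition count_le :: "nat set \<Rightarrow> nat \<Rightarrow> nat" where
  "count_le A q = card {x \<in> A. x \<le> q}"

lemma count_le_insert:
  "finite A \<Longrightarrow> y \<notin> A \<Longrightarrow> count_le (insert y A) q = count_le A q + (if y \<le> q then 1 else 0)"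
proof (cases "y \<le> q")
  case True
  assume "finite A" "y \<notin> A"
  moreover have "{x \<in> insert y A. x \<le> q} = insert y {x \<in> A. x \<le> q}" using True by auto
  ultimately show ?thesis using True by (simp add: count_le_def)
next
  case False
  then have "{x \<in> insert y A. x \<le> q} = {x \<in> A. x \<le> q}" by auto
  then show ?thesis using False by (simp add: count_le_def)
qed

lemma count_le_interval: "count_le {1..b} q = min b q"
proof -
  have "{x \<in> {1..b}. x \<le> q} = {1..min b q}" by auto
  then show ?thesis by (simp add: count_le_def)
qed

context pipe_dream
begin

definition cut_prefix :: "nat \<Rightarrow> nat \<Rightarrow> nat \<Rightarrow> nat set" where
  "cut_prefix a b P = cut_label a b ` {1..P}"

text \<open>The labels left of the cut through the right edge of \<open>(a, b)\<close>; for \<open>a = 0\<close> these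
  are the columns \<open>1, \<dots>, b\<close> entering from the top.\<close>

definition labels_upto :: "nat \<Rightarrow> nat \<Rightarrow> nat set" where
  "labels_upto a b = (if a = 0 then {1..b} else cut_prefix a b (a + b))"

definition cut_rank :: "nat \<Rightarrow> nat \<Rightarrow> nat \<Rightarrow> nat" where
  "cut_rank a b q = count_le (labels_upto a b) q"

lemma finite_cut_prefix: "finite (cut_prefix a b P)"
  by (simp add: cut_prefix_def)

lemma cut_prefix_Suc: "cut_prefix a b (Suc P) = insert (cut_label a b (Suc P)) (cut_prefix a b P)"
  unfolding cut_prefix_def by (auto simp: atLeastAtMostSuc_conv)

text \<open>Processing boxes whose swapped positions lie both inside or both outside \<open>{1..P}\<close>
  does not change the labels at positions \<open>1, \<dots>, P\<close>.\<close>

lemma cut_prefix_eq: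
  assumes "1 \<le> a" "b1 \<le> b2" "a + b2 \<le> m" "a + b2 \<le> P \<or> P < a + b1"
  shows "cut_prefix a b1 P = cut_prefix a b2 P"
proof -
  have "cut_prefix a (b2 - d) P = cut_prefix a b2 P" if "d \<le> b2 - b1" for d
    using that
  proof (induction d)
    case (Suc d)
    define b where "b = b2 - d"
    have b: "1 \<le> b" "a + b \<le> m" "b - 1 = b2 - Suc d" "a + b \<le> P \<or> P < a + b - 1"
      using Suc.prems assms by (auto simp: b_def)
    have "cut_prefix a (b - 1) P = cut_prefix a b P"
    proof (cases "(a, b) \<in> D")
      case True
      have "cut_label a (b - 1) = cut_label a b \<circ> adj_swap (a + b - 1)"
        using cut_label_step[OF assms(1) b(1,2)] True by auto
      moreover have "adj_swap (a + b - 1) ` {1..P} = {1..P}"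
        using adj_swap_image[of "a + b - 1" P] assms(1) b by auto
      moreover have "(cut_label a b \<circ> adj_swap (a + b - 1)) ` {1..P} =
                     cut_label a b ` adj_swap (a + b - 1) ` {1..P}"
        by (simp add: image_comp)
      ultimately show ?thesis unfolding cut_prefix_def by simp
    next
      case False
      then show ?thesis using cut_label_step[OF assms(1) b(1,2)] by (simp add: cut_prefix_def)
    qed
    then show ?case using Suc by (simp add: b_def)
  qed simp
  from this[of "b2 - b1"] show ?thesis using assms by simp
qed

lemma labels_upto_prev_row:
  assumes "1 \<le> a" "a + b + 1 \<le> m" "c \<le> b + 1"
  shows "labels_upto (a - 1) c = cut_prefix a (b + 1) (a - 1 + c)"
proof (cases "a = 1")
  case True
  have "cut_label 1 (b + 1) p = p" if "1 \<le> p" "p \<le> c" for p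
    using that assms pipe_label_first_row by (simp add: cut_label_def)
  then show ?thesis using True by (simp add: labels_upto_def cut_prefix_def)
next
  case False
  have a: "1 \<le> a - 1" "a - 1 + 1 \<le> m" using assms False by auto
  have "labels_upto (a - 1) c = cut_prefix (a - 1) c (a - 1 + c)"
    using False assms by (simp add: labels_upto_def)
  also have "\<dots> = cut_prefix (a - 1) 0 (a - 1 + c)"
    using cut_prefix_eq[of "a - 1" 0 c] a assms by simp
  also have "\<dots> = cut_prefix a (m - a) (a - 1 + c)"
    unfolding cut_prefix_def using cut_label_next_row[OF a] a assms by (intro image_cong) auto
  also have "\<dots> = cut_prefix a (b + 1) (a - 1 + c)"
    by (rule cut_prefix_eq[symmetric]) (use assms in auto)
  finally show ?thesis .
qed

lemma labels_upto_around_box: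
  assumes a: "1 \<le> a" "a + b + 1 \<le> m"
  defines "u \<equiv> top_label (a, b + 1)" and "w \<equiv> right_label (a, b + 1)"
    and "A \<equiv> labels_upto (a - 1) b"
  shows "labels_upto (a - 1) (b + 1) = insert u A"
    and "labels_upto a (b + 1) = insert w (insert u A)"
    and "labels_upto a b = insert (if (a, b + 1) \<in> D then w else u) A"
    and "u \<notin> A" and "w \<notin> insert u A"
proof -
  have b: "1 \<le> b + 1" "a + (b + 1) \<le> m" using a by auto
  have A: "A = cut_prefix a (b + 1) (a + b - 1)"
    using labels_upto_prev_row[OF a, of b] a by (simp add: A_def)
  have Su: "cut_label a (b + 1) (a + b) = u"
    using top_right_label_cut[OF a(1) b(1)] by (simp add: u_def)
  have Sw: "cut_label a (b + 1) (a + b + 1) = w"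
    using top_right_label_cut[OF a(1) b(1)] by (simp add: w_def)
  have A1: "cut_prefix a (b + 1) (a + b) = insert u A"
    using cut_prefix_Suc[of a "b + 1" "a + b - 1"] Su a A by (simp add: Suc_diff_le)
  show "labels_upto (a - 1) (b + 1) = insert u A"
    using labels_upto_prev_row[OF a, of "b + 1"] A1 a by simp
  show "labels_upto a (b + 1) = insert w (insert u A)"
    using cut_prefix_Suc[of a "b + 1" "a + b"] Sw A1 a by (simp add: labels_upto_def add.assoc)
  have not_in: "cut_label a (b + 1) p \<notin> cut_prefix a (b + 1) (p - 1)" if "1 \<le> p" "p \<le> m" for p
  proof
    assume "cut_label a (b + 1) p \<in> cut_prefix a (b + 1) (p - 1)"
    then obtain p' where p': "p' \<in> {1..p - 1}" "cut_label a (b + 1) p' = cut_label a (b + 1) p"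
      by (auto simp: cut_prefix_def)
    have "p' \<in> {1..m}" "p \<in> {1..m}" using p' that by auto
    from cut_label_inj[OF a(1) b(2) this p'(2)] have "p' = p" .
    then show False using p'(1) by auto
  qed
  show "u \<notin> A" using not_in[of "a + b"] Su a A by simp
  show "w \<notin> insert u A" using not_in[of "a + b + 1"] Sw A1 a by simp
  have step: "cut_label a b p =
    (if (a, b + 1) \<in> D then cut_label a (b + 1) (adj_swap (a + b) p) else cut_label a (b + 1) p)" for p
    using cut_label_step[OF a(1) b] by simp
  have "cut_prefix a b (a + b - 1) = A"
    unfolding cut_prefix_def A using step by (intro image_cong) (auto simp: adj_swap_def)
  moreover have "cut_label a b (a + b) = (if (a, b + 1) \<in> D then w else u)"
    using step[of "a + b"] Su Sw by (simp add: adj_swap_def)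
  ultimately show "labels_upto a b = insert (if (a, b + 1) \<in> D then w else u) A"
    using cut_prefix_Suc[of a b "a + b - 1"] a by (simp add: labels_upto_def Suc_diff_le)
qed

lemma finite_labels_upto: "finite (labels_upto a b)"
  by (simp add: labels_upto_def finite_cut_prefix)

lemma cut_rank_step:
  assumes a: "1 \<le> a" "a + b + 1 \<le> m"
  defines "u \<equiv> top_label (a, b + 1)" and "w \<equiv> right_label (a, b + 1)"
  shows "cut_rank (a - 1) (b + 1) q = cut_rank (a - 1) b q + (if u \<le> q then 1 else 0)"
    and "cut_rank a (b + 1) q =
           cut_rank (a - 1) b q + (if u \<le> q then 1 else 0) + (if w \<le> q then 1 else 0)"
    and "cut_rank a b q =
           cut_rank (a - 1) b q + (if (if (a, b + 1) \<in> D then w else u) \<le> q then 1 else 0)"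
proof -
  note L = labels_upto_around_box[OF a, folded u_def w_def]
  note fin = finite_labels_upto[of "a - 1" b] finite_insert[THEN iffD2, OF finite_labels_upto]
  show "cut_rank (a - 1) (b + 1) q = cut_rank (a - 1) b q + (if u \<le> q then 1 else 0)"
    unfolding cut_rank_def L(1) using count_le_insert[OF fin(1) L(4)] by simp
  show "cut_rank a (b + 1) q =
          cut_rank (a - 1) b q + (if u \<le> q then 1 else 0) + (if w \<le> q then 1 else 0)"
    unfolding cut_rank_def L(2) using count_le_insert[OF fin(1) L(4)] count_le_insert[OF fin(2) L(5)]
    by simp
  have "(if (a, b + 1) \<in> D then w else u) \<notin> labels_upto (a - 1) b" using L(4,5) by auto
  then show "cut_rank a b q =
               cut_rank (a - 1) b q + (if (if (a, b + 1) \<in> D then w else u) \<le> q then 1 else 0)"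
    unfolding cut_rank_def L(3) using count_le_insert[OF fin(1)] by simp
qed

lemma cut_rank_top: "cut_rank 0 b q = min b q"
  using count_le_interval by (simp add: cut_rank_def labels_upto_def)

lemma cut_rank_last: "1 \<le> a \<Longrightarrow> a + b = m \<Longrightarrow> cut_rank a b q = min m q"
  using bij_cut_label[of a b] count_le_interval[of m q]
  by (simp add: cut_rank_def labels_upto_def cut_prefix_def bij_betw_def)

lemma cut_rank_exits:
  assumes "1 \<le> p" "p \<le> m"
  shows "cut_rank p 0 q = count_le ((\<lambda>r. L r 0 False) ` {1..p}) q"
proof -
  have "cut_label p 0 ` {1..p} = (\<lambda>r. L r 0 False) ` {1..p}"
    by (rule image_cong) (auto simp: cut_label_def)
  then show ?thesis using assms by (simp add: cut_rank_def labels_upto_def cut_prefix_def)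
qed

lemma cut_rank_le: "a + b \<le> m \<Longrightarrow> cut_rank a b q \<le> q \<and> cut_rank a b q \<le> a + b"
proof -
  assume ab: "a + b \<le> m"
  have sub: "labels_upto a b \<subseteq> {1..m}"
    using cut_label_range[of a b] ab by (auto simp: labels_upto_def cut_prefix_def)
  have card: "card (labels_upto a b) \<le> a + b"
    using card_image_le[of "{1..a + b}" "cut_label a b"]
    by (simp add: labels_upto_def cut_prefix_def)
  have "{x \<in> labels_upto a b. x \<le> q} \<subseteq> {1..q}" using sub by auto
  then have "count_le (labels_upto a b) q \<le> q"
    unfolding count_le_def using card_mono[of "{1..q}"] by fastforce
  moreover have "count_le (labels_upto a b) q \<le> card (labels_upto a b)"
    unfolding count_le_def using sub by (intro card_mono) (auto intro: finite_subset)
  ultimately show ?thesis using card by (simp add: cut_rank_def)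
qed

end

section \<open>The greedy pipe dream in a set of boxes\<close>

text \<open>\<open>greedy_rank m q U a b\<close> computes \<open>cut_rank a b q\<close> of the pipe dream inside \<open>U\<close> whose
  crossings are exactly the boxes of \<open>U\<close> where the pipe from above has the smaller label
  (see \<open>cut_rank_eq_greedy_rank\<close>); its recursion follows \<open>cut_rank_step\<close>, since at a box
  of \<open>U\<close> the label added to the cut is the larger one.\<close>

function greedy_rank :: "nat \<Rightarrow> nat \<Rightarrow> (nat \<times> nat) set \<Rightarrow> nat \<Rightarrow> nat \<Rightarrow> int" where
  "greedy_rank m q U a b =
     (if a = 0 then int (min b q)
      else if m \<le> a + b then int (min m q)
      else if (a, b + 1) \<in> U
      then max (greedy_rank m q U (a - 1) b) (greedy_rank m q U a (b + 1) - 1)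
      else greedy_rank m q U (a - 1) (b + 1))"
  by pat_completeness auto
termination
  by (relation "measures [\<lambda>(m, q, U, a, b). a, \<lambda>(m, q, U, a, b). m - b]") auto

declare greedy_rank.simps [simp del]

lemma greedy_rank_top: "greedy_rank m q U 0 b = int (min b q)"
  by (simp add: greedy_rank.simps)

lemma greedy_rank_last: "1 \<le> a \<Longrightarrow> m \<le> a + b \<Longrightarrow> greedy_rank m q U a b = int (min m q)"
  by (simp add: greedy_rank.simps)

lemma greedy_rank_box:
  "1 \<le> a \<Longrightarrow> a + b + 1 \<le> m \<Longrightarrow> (a, b + 1) \<in> U \<Longrightarrow>
   greedy_rank m q U a b = max (greedy_rank m q U (a - 1) b) (greedy_rank m q U a (b + 1) - 1)"
  by (simp add: greedy_rank.simps[of m q U a b])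

lemma greedy_rank_no_box:
  "1 \<le> a \<Longrightarrow> a + b + 1 \<le> m \<Longrightarrow> (a, b + 1) \<notin> U \<Longrightarrow>
   greedy_rank m q U a b = greedy_rank m q U (a - 1) (b + 1)"
  by (simp add: greedy_rank.simps[of m q U a b])

lemma rank_induct [case_names top last step]:
  fixes m a b :: nat
  assumes top: "\<And>b. P 0 b"
    and last: "\<And>a b. 1 \<le> a \<Longrightarrow> m \<le> a + b \<Longrightarrow> P a b"
    and step: "\<And>a b. 1 \<le> a \<Longrightarrow> a + b + 1 \<le> m \<Longrightarrow>
      P (a - 1) b \<Longrightarrow> P (a - 1) (b + 1) \<Longrightarrow> P a (b + 1) \<Longrightarrow> P a b"
  shows "P a b"
proof (induction a arbitrary: b)
  case (Suc a)
  show ?case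
  proof (induction "m - Suc a - b" arbitrary: b)
    case 0
    then show ?case using last by simp
  next
    case (Suc d)
    then show ?case using step[of "Suc a" b] Suc.IH by simp
  qed
qed (rule top)

function greedy_label :: "nat \<Rightarrow> (nat \<times> nat) set \<Rightarrow> nat \<Rightarrow> nat \<Rightarrow> bool \<Rightarrow> nat" where
  "greedy_label m U a b True =
     (if a \<le> 1 then b
      else if (a - 1, b) \<in> U \<and> greedy_label m U (a - 1) b True < greedy_label m U (a - 1) b False
      then greedy_label m U (a - 1) b True
      else greedy_label m U (a - 1) b False)"
| "greedy_label m U a b False =
     (if m < a + b then 0
      else if (a, b + 1) \<in> U \<and> greedy_label m U a (b + 1) True < greedy_label m U a (b + 1) False
      then greedy_label m U a (b + 1) False
      else greedy_label m U a (b + 1) True)"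
  by pat_completeness auto
termination
  by (relation "measure (\<lambda>(m, U, a, b, ft). 2 * a + 2 * (m + 1 - b) + (if ft then 1 else 0))") auto

declare greedy_label.simps [simp del]

definition greedy_pd :: "nat \<Rightarrow> (nat \<times> nat) set \<Rightarrow> (nat \<times> nat) set" where
  "greedy_pd m U =
     {x \<in> U. greedy_label m U (fst x) (snd x) True < greedy_label m U (fst x) (snd x) False}"

lemma greedy_pd_subset: "greedy_pd m U \<subseteq> U"
  by (auto simp: greedy_pd_def)

lemma pipe_label_greedy_pd: "pipe_label m (greedy_pd m U) a b ft = greedy_label m U a b ft"
proof (induction m "greedy_pd m U" a b ft rule: pipe_label.induct)
  case (1 m a b)
  then show ?case
    by (simp add: pipe_label.simps(1)[of m _ a b] greedy_label.simps(1)[of m U a b] greedy_pd_def)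
next
  case (2 m a b)
  then show ?case
    by (simp add: pipe_label.simps(2)[of m _ a b] greedy_label.simps(2)[of m U a b] greedy_pd_def)
qed

lemma pipe_dream_greedy_pd: "U \<subseteq> staircase m \<Longrightarrow> 1 \<le> m \<Longrightarrow> pipe_dream m (greedy_pd m U)"
  by unfold_locales (auto simp: greedy_pd_def)

context pipe_dream
begin

lemma cut_rank_eq_greedy_rank:
  assumes U: "U \<subseteq> staircase m" and "D \<subseteq> U"
    and ordered: "\<forall>x\<in>D. top_label x < right_label x"
    and unordered: "\<forall>x\<in>U - D. right_label x < top_label x"
  shows "a + b \<le> m \<Longrightarrow> int (cut_rank a b q) = greedy_rank m q U a b"
proof (induction a b rule: rank_induct[where m = m])
  case (top b)
  then show ?case using cut_rank_top greedy_rank_top by simp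
next
  case (last a b)
  then show ?case using cut_rank_last[of a b q] greedy_rank_last[of a m b q U] by simp
next
  case (step a b)
  define u where "u = top_label (a, b + 1)"
  define w where "w = right_label (a, b + 1)"
  note rank = cut_rank_step[OF step.hyps(1,2), of q, folded u_def w_def]
  have IH: "int (cut_rank (a - 1) b q) = greedy_rank m q U (a - 1) b"
    "int (cut_rank (a - 1) (b + 1) q) = greedy_rank m q U (a - 1) (b + 1)"
    "int (cut_rank a (b + 1) q) = greedy_rank m q U a (b + 1)"
    using step.IH step.hyps by simp_all
  show ?case
  proof (cases "(a, b + 1) \<in> U")
    case True
    have "(a, b + 1) \<in> D \<longleftrightarrow> u < w"
    proof
      assume "u < w"
      then show "(a, b + 1) \<in> D" using True unordered by (force simp: u_def w_def)
    qed (use ordered in \<open>simp add: u_def w_def\<close>)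
    moreover have "u \<noteq> w" using top_right_labels[of "(a, b + 1)"] step.hyps by (simp add: staircase_def u_def w_def)
    ultimately show ?thesis
      using greedy_rank_box[OF step.hyps(1,2) True] rank(2,3) IH(1,3)
      by (auto split: if_splits)
  next
    case False
    then have "(a, b + 1) \<notin> D" using \<open>D \<subseteq> U\<close> by blast
    then show ?thesis
      using greedy_rank_no_box[OF step.hyps(1,2) False] rank(1,3) IH(1,2) by simp
  qed
qed

end

lemma greedy_pd_ordered:
  assumes U: "U \<subseteq> staircase m" and m: "1 \<le> m"
  shows "\<forall>x\<in>greedy_pd m U. pipe_dream.top_label m (greedy_pd m U) x < pipe_dream.right_label m (greedy_pd m U) x"
    and "\<forall>x\<in>U - greedy_pd m U. pipe_dream.right_label m (greedy_pd m U) x < pipe_dream.top_label m (greedy_pd m U) x"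
proof -
  interpret G: pipe_dream m "greedy_pd m U" using pipe_dream_greedy_pd[OF U m] .
  have mem: "x \<in> greedy_pd m U \<longleftrightarrow> x \<in> U \<and> G.top_label x < G.right_label x" for x
  proof -
    have "x \<in> greedy_pd m U \<longleftrightarrow>
          x \<in> U \<and> greedy_label m U (fst x) (snd x) True < greedy_label m U (fst x) (snd x) False"
      by (simp add: greedy_pd_def)
    then show ?thesis by (simp add: G.top_label_def G.right_label_def pipe_label_greedy_pd)
  qed
  show "\<forall>x\<in>greedy_pd m U. G.top_label x < G.right_label x" using mem by blast
  show "\<forall>x\<in>U - greedy_pd m U. G.right_label x < G.top_label x"
  proof
    fix x assume x: "x \<in> U - greedy_pd m U"
    then have "\<not> G.top_label x < G.right_label x" using mem by blast
    moreover have "G.top_label x \<noteq> G.right_label x" using G.top_right_labels x U by blast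
    ultimately show "G.right_label x < G.top_label x" by simp
  qed
qed

lemma greedy_rank_eq_cut_rank:
  assumes U: "U \<subseteq> staircase m" and m: "1 \<le> m" and ab: "a + b \<le> m"
  shows "greedy_rank m q U a b = int (pipe_dream.cut_rank m (greedy_pd m U) a b q)"
proof -
  interpret G: pipe_dream m "greedy_pd m U" using pipe_dream_greedy_pd[OF U m] .
  show ?thesis
    using G.cut_rank_eq_greedy_rank[OF U greedy_pd_subset greedy_pd_ordered[OF U m] ab] by simp
qed

lemma greedy_rank_bounds:
  assumes U: "U \<subseteq> staircase m" and m: "1 \<le> m" and ab: "a + b \<le> m"
  shows "0 \<le> greedy_rank m q U a b \<and> greedy_rank m q U a b \<le> int q \<and>
         greedy_rank m q U a b \<le> int (a + b)"
proof -
  interpret G: pipe_dream m "greedy_pd m U" using pipe_dream_greedy_pd[OF U m] .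
  show ?thesis using greedy_rank_eq_cut_rank[OF U m ab, of q] G.cut_rank_le[OF ab, of q] by simp
qed

lemma greedy_rank_lipschitz:
  assumes U: "U \<subseteq> staircase m" and m: "1 \<le> m" and a: "1 \<le> a" "a + b + 1 \<le> m"
  shows "greedy_rank m q U (a - 1) b \<le> greedy_rank m q U (a - 1) (b + 1)"
    and "greedy_rank m q U (a - 1) (b + 1) \<le> greedy_rank m q U (a - 1) b + 1"
    and "greedy_rank m q U (a - 1) (b + 1) \<le> greedy_rank m q U a (b + 1)"
    and "greedy_rank m q U a (b + 1) \<le> greedy_rank m q U (a - 1) (b + 1) + 1"
proof -
  interpret G: pipe_dream m "greedy_pd m U" using pipe_dream_greedy_pd[OF U m] .
  note eq = greedy_rank_eq_cut_rank[OF U m]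
  note R = G.cut_rank_step[OF a, of q]
  show "greedy_rank m q U (a - 1) b \<le> greedy_rank m q U (a - 1) (b + 1)"
    using eq[of "a - 1" b] eq[of "a - 1" "b + 1"] a R(1) by simp
  show "greedy_rank m q U (a - 1) (b + 1) \<le> greedy_rank m q U (a - 1) b + 1"
    using eq[of "a - 1" b] eq[of "a - 1" "b + 1"] a R(1) by simp
  show "greedy_rank m q U (a - 1) (b + 1) \<le> greedy_rank m q U a (b + 1)"
    using eq[of a "b + 1"] eq[of "a - 1" "b + 1"] a R(1,2) by simp
  show "greedy_rank m q U a (b + 1) \<le> greedy_rank m q U (a - 1) (b + 1) + 1"
    using eq[of a "b + 1"] eq[of "a - 1" "b + 1"] a R(1,2) by simp
qed

lemma greedy_rank_antimono:
  assumes U2: "U2 \<subseteq> staircase m" and U12: "U1 \<subseteq> U2" and m: "1 \<le> m"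
  shows "a + b \<le> m \<Longrightarrow> greedy_rank m q U2 a b \<le> greedy_rank m q U1 a b"
proof (induction a b rule: rank_induct[where m = m])
  case (top b)
  then show ?case by (simp add: greedy_rank_top)
next
  case (last a b)
  then show ?case by (simp add: greedy_rank_last)
next
  case (step a b)
  have U1: "U1 \<subseteq> staircase m" using U12 U2 by blast
  have IH: "greedy_rank m q U2 (a - 1) b \<le> greedy_rank m q U1 (a - 1) b"
    "greedy_rank m q U2 (a - 1) (b + 1) \<le> greedy_rank m q U1 (a - 1) (b + 1)"
    "greedy_rank m q U2 a (b + 1) \<le> greedy_rank m q U1 a (b + 1)"
    using step.IH step.hyps by simp_all
  consider "(a, b + 1) \<in> U1" | "(a, b + 1) \<in> U2 - U1" | "(a, b + 1) \<notin> U2" using U12 by blast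
  then show ?case
  proof cases
    case 1
    then show ?thesis
      using greedy_rank_box[OF step.hyps 1] greedy_rank_box[OF step.hyps, of U2] U12 IH(1,3)
      by (auto simp: le_max_iff_disj)
  next
    case 2
    then show ?thesis
      using greedy_rank_box[OF step.hyps, of U2] greedy_rank_no_box[OF step.hyps, of U1]
        greedy_rank_lipschitz[OF U1 m step.hyps, of q] IH by simp
  next
    case 3
    moreover have "(a, b + 1) \<notin> U1" using 3 U12 by blast
    ultimately show ?thesis
      using greedy_rank_no_box[OF step.hyps, of U1] greedy_rank_no_box[OF step.hyps, of U2] IH(2)
      by simp
  qed
qed

lemma greedy_rank_hook:
  assumes U: "U \<subseteq> staircase m" and m: "1 \<le> m"
  shows "a' \<le> a \<Longrightarrow> b \<le> b' \<Longrightarrow> a + b \<le> m \<Longrightarrow> a' + b' \<le> m \<Longrightarrow>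
    (\<forall>y. b < y \<and> y \<le> b' \<and> a + y \<le> m \<longrightarrow> (a, y) \<in> U) \<Longrightarrow>
    (\<forall>x. a' < x \<and> x \<le> a \<and> x + b' + 1 \<le> m \<longrightarrow> (x, b' + 1) \<in> U) \<Longrightarrow>
    greedy_rank m q U a' b' - int (b' - b) \<le> greedy_rank m q U a b"
proof (induction "(b' - b) + (a - a')" arbitrary: a b)
  case 0
  then have "a' = a" "b' = b" by auto
  then show ?case by simp
next
  case (Suc N)
  consider "a = 0" | "1 \<le> a" "m \<le> a + b" | "1 \<le> a" "a + b + 1 \<le> m" by linarith
  then show ?case
  proof cases
    case 1
    then show ?thesis using Suc.prems by (simp add: greedy_rank_top)
  next
    case 2
    then show ?thesis
      using Suc.prems greedy_rank_bounds[OF U m Suc.prems(4), of q] greedy_rank_last[of a m b q U]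
      by (simp add: min_def)
  next
    case 3
    then have a: "1 \<le> a" "a + b + 1 \<le> m" by auto
    show ?thesis
    proof (cases "b < b'")
      case True
      have inU: "(a, b + 1) \<in> U" using Suc.prems(5) True a by simp
      have "greedy_rank m q U a' b' - int (b' - (b + 1)) \<le> greedy_rank m q U a (b + 1)"
        using Suc.hyps(1)[of "b + 1" a] Suc.hyps(2) Suc.prems True a by auto
      then show ?thesis using greedy_rank_box[OF a inU] True by simp
    next
      case False
      then have b: "b = b'" "a' < a" using Suc.prems Suc.hyps(2) by auto
      have inU: "(a, b + 1) \<in> U" using Suc.prems(6) a b by simp
      have "greedy_rank m q U a' b' - int (b' - b) \<le> greedy_rank m q U (a - 1) b"
      proof (rule Suc.hyps(1))
        show "N = b' - b + (a - 1 - a')" using Suc.hyps(2) b by simp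
        show "\<forall>x. a' < x \<and> x \<le> a - 1 \<and> x + b' + 1 \<le> m \<longrightarrow> (x, b' + 1) \<in> U"
          using Suc.prems(6) by auto
      qed (use a b Suc.prems in auto)
      then show ?thesis using greedy_rank_box[OF a inU] by simp
    qed
  qed
qed

section \<open>North-east chains of boxes\<close>

text \<open>The boxes corresponding to the diagonals in \<open>\<Gamma>\<^sub>n\<^sub>,\<^sub>k\<close> when \<open>m = n - k\<close>.\<close>

definition gamma_boxes :: "nat \<Rightarrow> nat \<Rightarrow> (nat \<times> nat) set" where
  "gamma_boxes m k = {(a, b). 1 \<le> a \<and> 1 \<le> b \<and> k + 2 \<le> a + b \<and> a + b \<le> m}"

definition north_east :: "nat \<times> nat \<Rightarrow> nat \<times> nat \<Rightarrow> bool" where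
  "north_east x y = (fst y < fst x \<and> snd x < snd y)"

lemma gamma_boxes_subset_staircase: "gamma_boxes m k \<subseteq> staircase m"
  by (auto simp: gamma_boxes_def staircase_def)

lemma north_east_chain_hd:
  "sorted_wrt north_east ys \<Longrightarrow> y \<in> set ys \<Longrightarrow> fst y \<le> fst (hd ys) \<and> snd (hd ys) \<le> snd y"
  by (cases ys) (auto simp: north_east_def)

lemma north_east_chain_last:
  assumes "sorted_wrt north_east xs" "y \<in> set xs"
  shows "snd y \<le> snd (last xs)"
  using assms
proof (induction xs)
  case (Cons x xs)
  show ?case
  proof (cases "xs = []")
    case False
    have "north_east x (last xs)" using Cons.prems(1) False by simp
    moreover have "y \<in> set xs \<Longrightarrow> snd y \<le> snd (last xs)" using Cons by simp
    ultimately show ?thesis using Cons.prems(2) False by (auto simp: north_east_def)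
  qed (use Cons in auto)
qed simp

lemma north_east_chain_nth:
  "sorted_wrt north_east xs \<Longrightarrow> i < j \<Longrightarrow> j < length xs \<Longrightarrow> north_east (xs ! i) (xs ! j)"
  by (simp add: sorted_wrt_iff_nth_less)

definition small_rank_or_chain ::
    "nat \<Rightarrow> nat \<Rightarrow> nat \<Rightarrow> (nat \<times> nat) set \<Rightarrow> nat \<Rightarrow> nat \<Rightarrow> nat \<Rightarrow> int \<Rightarrow> bool" where
  "small_rank_or_chain m k q E s a b r =
     (r \<le> max (int k) (max (int s + int b) (int a + int b + int q - int m)) \<or>
      (\<exists>xs. length xs = s + 1 \<and> set xs \<subseteq> E \<and> sorted_wrt north_east xs \<and>
         fst (hd xs) \<le> a \<and> b + 1 \<le> snd (hd xs) \<and> int (snd (last xs)) + r \<le> int (b + s + 1 + q)))"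

lemma small_rank_or_chain_row_mono:
  "small_rank_or_chain m k q E s a' b r \<Longrightarrow> a' \<le> a \<Longrightarrow> small_rank_or_chain m k q E s a b r"
  unfolding small_rank_or_chain_def by (auto simp: le_max_iff_disj)

lemma small_rank_or_chain_column_step:
  "small_rank_or_chain m k q E s a (b + 1) r \<Longrightarrow> small_rank_or_chain m k q E s a b (r - 1)"
  unfolding small_rank_or_chain_def by (auto simp: le_max_iff_disj)

lemma small_rank_or_chain_cons:
  assumes "small_rank_or_chain m k q E s (a - 1) (b + 1) r" and "(a, b + 1) \<in> E" and "1 \<le> a"
  shows "small_rank_or_chain m k q E (s + 1) a b r"
proof -
  from assms(1) consider
    "r \<le> max (int k) (max (int s + int (b + 1)) (int (a - 1) + int (b + 1) + int q - int m))" |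
    ys where "length ys = s + 1" "set ys \<subseteq> E" "sorted_wrt north_east ys"
      "fst (hd ys) \<le> a - 1" "b + 1 + 1 \<le> snd (hd ys)"
      "int (snd (last ys)) + r \<le> int (b + 1 + s + 1 + q)"
    unfolding small_rank_or_chain_def by blast
  then show ?thesis
  proof cases
    case 1
    then show ?thesis using assms(3) by (auto simp: small_rank_or_chain_def le_max_iff_disj)
  next
    case (2 ys)
    have "\<forall>y\<in>set ys. north_east (a, b + 1) y"
      using north_east_chain_hd[OF 2(3)] 2(4,5) assms(3) by (fastforce simp: north_east_def)
    then show ?thesis unfolding small_rank_or_chain_def
      using 2 assms(2) by (intro disjI2 exI[of _ "(a, b + 1) # ys"]) (auto simp: Suc_le_eq)
  qed
qed

lemma greedy_rank_small_or_chain: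
  assumes U: "U \<subseteq> gamma_boxes m k" and m: "1 \<le> m"
  shows "a + b \<le> m \<Longrightarrow> s \<le> k \<Longrightarrow>
    small_rank_or_chain m k q (gamma_boxes m k - U) s a b (greedy_rank m q U a b)"
proof (induction a b arbitrary: s rule: rank_induct[where m = m])
  case (top b)
  have "int (min b q) \<le> int s + int b" by simp
  then show ?case by (simp add: small_rank_or_chain_def greedy_rank_top le_max_iff_disj)
next
  case (last a b)
  then show ?case by (simp add: small_rank_or_chain_def greedy_rank_last le_max_iff_disj)
next
  case (step a b)
  have Us: "U \<subseteq> staircase m" using U gamma_boxes_subset_staircase by blast
  show ?case
  proof (cases "(a, b + 1) \<in> U")
    case True
    then show ?thesis
      using greedy_rank_box[OF step.hyps(1,2) True]
        small_rank_or_chain_row_mono[OF step.IH(1)[of s], of a]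
        small_rank_or_chain_column_step[OF step.IH(3)[of s]] step.hyps step.prems
      by (cases "greedy_rank m q U (a - 1) b \<le> greedy_rank m q U a (b + 1) - 1") (auto simp: max_def)
  next
    case notU: False
    note eq = greedy_rank_no_box[OF step.hyps(1,2) notU]
    show ?thesis
    proof (cases "(a, b + 1) \<in> gamma_boxes m k")
      case False
      then have "greedy_rank m q U a b \<le> int k"
        using eq greedy_rank_bounds[OF Us m, of "a - 1" "b + 1" q] step.hyps
        by (auto simp: gamma_boxes_def)
      then show ?thesis by (simp add: small_rank_or_chain_def le_max_iff_disj)
    next
      case True
      show ?thesis
      proof (cases s)
        case 0
        have "greedy_rank m q U a b \<le> int q"
          using greedy_rank_bounds[OF Us m, of a b q] step.hyps by simp
        then show ?thesis unfolding small_rank_or_chain_def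
          using 0 True notU by (intro disjI2 exI[of _ "[(a, b + 1)]"]) simp
      next
        case (Suc s')
        then show ?thesis
          using small_rank_or_chain_cons[OF step.IH(2)[of s'] _ step.hyps(1)] True notU eq
            step.hyps step.prems
          by simp
      qed
    qed
  qed
qed

locale gamma_chain =
  fixes m k :: nat and es :: "(nat \<times> nat) list"
  assumes m_pos: "1 \<le> m" and length_es: "length es = k + 1"
    and sorted_es: "sorted_wrt north_east es" and es_gamma: "set es \<subseteq> gamma_boxes m k"
begin

definition row :: "nat \<Rightarrow> nat" where "row t = fst (es ! t)"
definition col :: "nat \<Rightarrow> nat" where "col t = snd (es ! t)"

abbreviation U :: "(nat \<times> nat) set" where "U \<equiv> gamma_boxes m k - set es"

lemma U_staircase: "U \<subseteq> staircase m"
  using gamma_boxes_subset_staircase by blast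

lemma row_col_strict_mono: "s < t \<Longrightarrow> t \<le> k \<Longrightarrow> row t < row s \<and> col s < col t"
  using sorted_es length_es unfolding sorted_wrt_iff_nth_less row_def col_def north_east_def by auto

lemma row_col_inj: "s \<le> k \<Longrightarrow> t \<le> k \<Longrightarrow> row s = row t \<or> col s = col t \<Longrightarrow> s = t"
  using row_col_strict_mono[of s t] row_col_strict_mono[of t s] by (cases s t rule: linorder_cases) auto

lemma chain_box: "t \<le> k \<Longrightarrow> 1 \<le> row t \<and> 1 \<le> col t \<and> k + 2 \<le> row t + col t \<and> row t + col t \<le> m"
proof -
  assume "t \<le> k"
  then have "es ! t \<in> gamma_boxes m k" using es_gamma length_es by auto
  then show ?thesis by (auto simp: gamma_boxes_def row_def col_def split: prod.splits)
qed

lemma mem_chain: "(x, y) \<in> set es \<Longrightarrow> \<exists>t\<le>k. row t = x \<and> col t = y"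
  using length_es by (auto simp: in_set_conv_nth row_def col_def less_Suc_eq_le)

lemma col_gt_index: "t \<le> k \<Longrightarrow> t < col t"
proof (induction t)
  case (Suc t)
  then show ?case using row_col_strict_mono[of t "Suc t"] by simp
qed (use chain_box[of 0] in simp)

lemma first_row_gt_k: "k < row 0"
proof -
  have "t \<le> k \<Longrightarrow> row k + (k - t) \<le> row t" for t
  proof (induction "k - t" arbitrary: t)
    case (Suc d)
    have "row k + (k - Suc t) \<le> row (Suc t)" using Suc.hyps(1)[of "Suc t"] Suc.hyps(2) by simp
    moreover have "row (Suc t) < row t" using row_col_strict_mono[of t "Suc t"] Suc.hyps(2) by simp
    ultimately show ?case using Suc.hyps(2) by linarith
  qed simp
  from this[of 0] show ?thesis using chain_box[of k] by simp
qed

lemma greedy_rank_at_chain_box: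
  "t \<le> k \<Longrightarrow> greedy_rank m q U (row t) (col t - 1) = greedy_rank m q U (row t - 1) (col t)"
  using greedy_rank_no_box[of "row t" "col t - 1" m U q] chain_box[of t] length_es
  by (auto simp: row_def col_def)

lemma hook_first: "greedy_rank m q U (row 0) (col 0 - 1) - int (col 0 - 1) \<le> greedy_rank m q U (row 0) 0"
proof -
  have "greedy_rank m q U (row 0) (col 0 - 1) - int (col 0 - 1 - 0) \<le> greedy_rank m q U (row 0) 0"
  proof (rule greedy_rank_hook[OF U_staircase m_pos])
    show "row 0 \<le> row 0" "0 \<le> col 0 - 1" "row 0 + 0 \<le> m" "row 0 + (col 0 - 1) \<le> m"
      using chain_box[of 0] by auto
    show "\<forall>y. 0 < y \<and> y \<le> col 0 - 1 \<and> row 0 + y \<le> m \<longrightarrow> (row 0, y) \<in> U"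
    proof (intro allI impI)
      fix y assume y: "0 < y \<and> y \<le> col 0 - 1 \<and> row 0 + y \<le> m"
      have "(row 0, y) \<notin> set es" using mem_chain row_col_inj[of _ 0] y by fastforce
      then show "(row 0, y) \<in> U" using y first_row_gt_k by (auto simp: gamma_boxes_def)
    qed
  qed auto
  then show ?thesis by simp
qed

lemma hook_next:
  assumes "t < k"
  shows "greedy_rank m q U (row (t + 1)) (col (t + 1) - 1) - int (col (t + 1) - 1 - col t)
    \<le> greedy_rank m q U (row t - 1) (col t)"
proof (rule greedy_rank_hook[OF U_staircase m_pos])
  note mono = row_col_strict_mono[of t "t + 1"]
  note box = chain_box[of t] chain_box[of "t + 1"]
  show "row (t + 1) \<le> row t - 1" "col t \<le> col (t + 1) - 1" "row t - 1 + col t \<le> m"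
    "row (t + 1) + (col (t + 1) - 1) \<le> m"
    using assms mono box by auto
  show "\<forall>y. col t < y \<and> y \<le> col (t + 1) - 1 \<and> row t - 1 + y \<le> m \<longrightarrow> (row t - 1, y) \<in> U"
  proof (intro allI impI)
    fix y assume y: "col t < y \<and> y \<le> col (t + 1) - 1 \<and> row t - 1 + y \<le> m"
    have "(row t - 1, y) \<notin> set es"
    proof
      assume "(row t - 1, y) \<in> set es"
      then obtain s where s: "s \<le> k" "col s = y" using mem_chain by blast
      consider "s \<le> t" | "s = t + 1" | "t + 1 < s" by linarith
      then show False
      proof cases
        case 1
        then have "col s \<le> col t" using row_col_strict_mono[of s t] assms by (cases "s = t") auto
        then show False using s y by simp
      next
        case 3
        then have "col (t + 1) < col s" using row_col_strict_mono[of "t + 1" s] s by simp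
        then show False using s y by linarith
      qed (use s y in auto)
    qed
    then show "(row t - 1, y) \<in> U" using y assms mono box by (auto simp: gamma_boxes_def)
  qed
  show "\<forall>x. row (t + 1) < x \<and> x \<le> row t - 1 \<and> x + (col (t + 1) - 1) + 1 \<le> m \<longrightarrow>
      (x, col (t + 1) - 1 + 1) \<in> U"
  proof (intro allI impI)
    fix x assume x: "row (t + 1) < x \<and> x \<le> row t - 1 \<and> x + (col (t + 1) - 1) + 1 \<le> m"
    have "(x, col (t + 1)) \<notin> set es" using mem_chain row_col_inj[of _ "t + 1"] x assms by fastforce
    then show "(x, col (t + 1) - 1 + 1) \<in> U" using x assms box by (auto simp: gamma_boxes_def)
  qed
qed

lemma hook_last: "greedy_rank m q U 0 (col k) \<le> greedy_rank m q U (row k - 1) (col k)"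
proof -
  have "(x, col k + 1) \<in> U" if "0 < x" "x \<le> row k - 1" "x + col k + 1 \<le> m" for x
  proof -
    have "col s \<le> col k" if "s \<le> k" for s
      using row_col_strict_mono[of s k] that by (cases "s = k") auto
    then have "(x, col k + 1) \<notin> set es" using mem_chain by fastforce
    then show ?thesis using that col_gt_index[of k] by (auto simp: gamma_boxes_def)
  qed
  then have "greedy_rank m q U 0 (col k) - int (col k - col k) \<le>
             greedy_rank m q U (row k - 1) (col k)"
    by (intro greedy_rank_hook[OF U_staircase m_pos]) (use chain_box[of k] in auto)
  then show ?thesis by simp
qed

lemma greedy_rank_along_chain:
  "t \<le> k \<Longrightarrow>
   greedy_rank m q U (row t - 1) (col t) - (int (col t) - 1 - int t) \<le> greedy_rank m q U (row 0) 0"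
proof (induction t)
  case 0
  then show ?case using hook_first greedy_rank_at_chain_box[of 0] chain_box[of 0] by simp
next
  case (Suc t)
  then show ?case
    using hook_next[of t, where q = q] greedy_rank_at_chain_box[of "Suc t", where q = q]
      row_col_strict_mono[of t "Suc t"] chain_box[of "Suc t"]
    by simp
qed

text \<open>The rows \<open>1, \<dots>, row 0\<close> of the greedy pipe dream avoiding the chain already contain
  \<open>k + 1\<close> exits with labels at most \<open>m + k - row 0\<close>.\<close>

lemma greedy_rank_chain_ge:
  assumes corner: "row 0 + col k \<le> m + k"
  shows "int k + 1 \<le> greedy_rank m (m + k - row 0) U (row 0) 0"
proof -
  have "greedy_rank m (m + k - row 0) U 0 (col k) = int (col k)"
    using corner by (simp add: greedy_rank_top)
  then show ?thesis
    using greedy_rank_along_chain[of k, where q = "m + k - row 0"] hook_last[where q = "m + k - row 0"]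
    by simp
qed

end

section \<open>Multitriangulations and reduced pipe dreams\<close>

definition pi_nk_entry :: "nat \<Rightarrow> nat \<Rightarrow> nat \<Rightarrow> nat" where
  "pi_nk_entry n k p = (if p \<le> k then p else n + 1 - p)"

lemma pi_nk_eq_map:
  assumes "k \<le> n - k"
  shows "pi_nk n k = map (pi_nk_entry n k) [1..<n - k + 1]"
proof (rule nth_equalityI)
  have len: "length (pi_nk n k) = n - k" using assms by (simp add: pi_nk_def; arith)
  then show "length (pi_nk n k) = length (map (pi_nk_entry n k) [1..<n - k + 1])" by (simp; arith)
  fix i assume "i < length (pi_nk n k)"
  then have i: "i < n - k" using len by simp
  show "pi_nk n k ! i = map (pi_nk_entry n k) [1..<n - k + 1] ! i"
  proof (cases "i < k")
    case True
    then show ?thesis using i by (simp add: pi_nk_def nth_append pi_nk_entry_def del: upt_Suc)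
  next
    case False
    have "pi_nk n k ! i = rev [k + 1..<n - k + 1] ! (i - k)"
      using False by (simp add: pi_nk_def nth_append del: upt_Suc)
    also have "\<dots> = n - i" using False i assms by (simp add: rev_nth del: upt_Suc)
    finally show ?thesis using False i by (simp add: pi_nk_entry_def del: upt_Suc)
  qed
qed

definition diag_of_box :: "nat \<Rightarrow> nat \<times> nat \<Rightarrow> nat \<times> nat" where
  "diag_of_box n x = (snd x, n + 1 - fst x)"

lemma box_of_Gamma:
  "x \<in> Gamma n k \<Longrightarrow> k \<le> n \<Longrightarrow>
   box_of n x \<in> gamma_boxes (n - k) k \<and> diag_of_box n (box_of n x) = x"
  by (cases x) (auto simp: Gamma_def box_of_def gamma_boxes_def diag_of_box_def)

lemma diag_of_gamma_box:
  "y \<in> gamma_boxes (n - k) k \<Longrightarrow> k \<le> n \<Longrightarrow>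
   diag_of_box n y \<in> Gamma n k \<and> box_of n (diag_of_box n y) = y"
  by (cases y) (auto simp: Gamma_def box_of_def gamma_boxes_def diag_of_box_def)

lemma diag_box_image:
  "T \<subseteq> Gamma n k \<Longrightarrow> k \<le> n \<Longrightarrow>
   diag_of_box n ` box_of n ` T = T \<and> box_of n ` T \<subseteq> gamma_boxes (n - k) k"
  using box_of_Gamma[of _ n k] by (force simp: image_image)

lemma box_diag_image:
  "E \<subseteq> gamma_boxes (n - k) k \<Longrightarrow> k \<le> n \<Longrightarrow>
   box_of n ` diag_of_box n ` E = E \<and> diag_of_box n ` E \<subseteq> Gamma n k"
  using diag_of_gamma_box[of _ n k] by (force simp: image_image)

lemma contains_crossing_mono: "contains_crossing r A \<Longrightarrow> A \<subseteq> B \<Longrightarrow> contains_crossing r B"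
  unfolding contains_crossing_def by blast

text \<open>The diagonals of two boxes, the second strictly north-east of the first, cross as soon as
  the row of the first plus the column of the second is at most \<open>n\<close>.\<close>

lemma north_east_chain_crossing:
  assumes len: "length xs = k + 1" and sorted: "sorted_wrt north_east xs"
    and sub: "set xs \<subseteq> gamma_boxes (n - k) k" and "k \<le> n"
    and corner: "fst (hd xs) + snd (last xs) \<le> n"
  shows "contains_crossing (k + 1) (diag_of_box n ` set xs)"
proof -
  have "distinct xs"
    using sorted by (induction xs) (auto simp: north_east_def)
  moreover have "inj_on (diag_of_box n) (set xs)"
    using diag_of_gamma_box[of _ n k] sub \<open>k \<le> n\<close> by (metis inj_onI subsetD)
  ultimately have card: "card (diag_of_box n ` set xs) = k + 1"
    using card_image distinct_card len by metis
  have crosses: "crosses (diag_of_box n (xs ! i)) (diag_of_box n (xs ! j))"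
    if "i < j" "j < length xs" for i j
  proof -
    have "north_east (xs ! i) (xs ! j)" using north_east_chain_nth[OF sorted that] .
    moreover have "fst (xs ! i) \<le> fst (hd xs)" "snd (xs ! j) \<le> snd (last xs)"
      using north_east_chain_hd[OF sorted] north_east_chain_last[OF sorted] that by auto
    moreover have "xs ! i \<in> gamma_boxes (n - k) k" "xs ! j \<in> gamma_boxes (n - k) k"
      using sub that by auto
    then have "fst (xs ! i) \<le> n" "fst (xs ! j) \<le> n" by (auto simp: gamma_boxes_def)
    ultimately show ?thesis using corner unfolding crosses_def diag_of_box_def north_east_def by auto
  qed
  have "\<forall>e\<in>diag_of_box n ` set xs. \<forall>f\<in>diag_of_box n ` set xs. e \<noteq> f \<longrightarrow> crosses e f"
  proof (intro ballI impI)
    fix e f assume ef: "e \<in> diag_of_box n ` set xs" "f \<in> diag_of_box n ` set xs" "e \<noteq> f"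
    obtain i where i: "i < length xs" "e = diag_of_box n (xs ! i)"
      using ef(1) by (auto simp: in_set_conv_nth)
    obtain j where j: "j < length xs" "f = diag_of_box n (xs ! j)"
      using ef(2) by (auto simp: in_set_conv_nth)
    consider "i < j" | "j < i" using i j ef(3) by fastforce
    then show "crosses e f"
      using crosses[of i j] crosses[of j i] i j by cases (auto simp: crosses_def)
  qed
  then have "is_crossing (k + 1) (diag_of_box n ` set xs)" using card by (simp add: is_crossing_def)
  then show ?thesis unfolding contains_crossing_def by blast
qed

lemma crossing_north_east_chain:
  assumes C: "is_crossing (k + 1) C" "C \<subseteq> Gamma n k" and "1 \<le> k"
  obtains es where "length es = k + 1" "sorted_wrt north_east es" "set es = box_of n ` C"
    "fst (es ! 0) + snd (es ! k) \<le> n"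
proof -
  have card: "card C = k + 1" and crosses: "\<forall>e\<in>C. \<forall>f\<in>C. e \<noteq> f \<longrightarrow> crosses e f"
    using C(1) by (simp_all add: is_crossing_def)
  have finite: "finite C" using card by (intro card_ge_0_finite) simp
  define ys where "ys = sorted_list_of_set C"
  have ys: "sorted_wrt (<) ys" "set ys = C" "length ys = k + 1"
    using finite card by (simp_all add: ys_def)
  have Gamma: "i < length ys \<Longrightarrow> ys ! i \<in> Gamma n k" for i using C(2) ys(2) by auto
  have cross: "fst (ys ! i) < fst (ys ! j) \<and> fst (ys ! j) < snd (ys ! i) \<and> snd (ys ! i) < snd (ys ! j)"
    if "i < j" "j < length ys" for i j
  proof -
    have lt: "ys ! i < ys ! j" using ys(1) that by (simp add: sorted_wrt_iff_nth_less)
    then have "ys ! i \<noteq> ys ! j" by simp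
    moreover have "ys ! i \<in> C" "ys ! j \<in> C" using ys(2) that by auto
    ultimately have "crosses (ys ! i) (ys ! j)" using crosses by blast
    then show ?thesis using lt by (cases "ys ! i", cases "ys ! j") (auto simp: crosses_def)
  qed
  define es where "es = map (box_of n) ys"
  have es: "i < length ys \<Longrightarrow> es ! i = (n + 1 - snd (ys ! i), fst (ys ! i))" for i
    by (simp add: es_def box_of_def split: prod.splits)
  have le_n: "i < length ys \<Longrightarrow> snd (ys ! i) \<le> n" for i
    using Gamma[of i] by (cases "ys ! i") (simp add: Gamma_def)
  show ?thesis
  proof
    show "length es = k + 1" using ys(3) by (simp add: es_def)
    show "sorted_wrt north_east es" unfolding sorted_wrt_iff_nth_less
    proof (intro allI impI)
      fix i j assume "i < j" "j < length es"
      then have ij: "i < j" "j < length ys" using ys(3) by (simp_all add: es_def)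
      show "north_east (es ! i) (es ! j)"
        using cross[OF ij] es[of i] es[of j] le_n[of i] le_n[of j] ij by (auto simp: north_east_def)
    qed
    show "set es = box_of n ` C" using ys(2) by (simp add: es_def)
    have "fst (ys ! k) < snd (ys ! 0)" using cross[of 0 k] ys(3) \<open>1 \<le> k\<close> by simp
    then show "fst (es ! 0) + snd (es ! k) \<le> n" using es[of 0] es[of k] le_n[of 0] ys(3) by simp
  qed
qed

context pipe_dream
begin

lemma pd_perm_eq_pi_nk_iff:
  assumes "m = n - k" "k \<le> m"
  shows "pd_perm m D = pi_nk n k \<longleftrightarrow> (\<forall>p\<in>{1..m}. L p 0 False = pi_nk_entry n k p)"
proof -
  have "pi_nk n k = map (pi_nk_entry n k) [1..<m + 1]" using pi_nk_eq_map[of k n] assms by simp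
  then show ?thesis using pd_perm_eq by (auto simp: map_eq_conv)
qed

lemma cut_label_small_fixed:
  assumes large: "\<forall>x\<in>D. k + 2 \<le> fst x + snd x \<or> k < top_label x" and "k \<le> m"
  shows "1 \<le> a \<Longrightarrow> a + b \<le> m \<Longrightarrow> \<forall>p. 1 \<le> p \<and> p \<le> k \<longrightarrow> cut_label a b p = p"
proof (induction a b rule: cut_induct)
  case init
  then show ?case using cut_label_init \<open>k \<le> m\<close> by simp
next
  case (step a b)
  show ?case
  proof (cases "(a, b) \<in> D")
    case False
    then show ?thesis using cut_label_step[OF step.hyps(1-3)] step.IH by simp
  next
    case True
    have "k < a + b - 1"
    proof (rule ccontr)
      assume "\<not> k < a + b - 1"
      then have "top_label (a, b) = a + b - 1"
        using step.IH step.hyps top_right_label_cut[of a b] by auto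
      then show False using large True \<open>\<not> k < a + b - 1\<close> by fastforce
    qed
    then have "adj_swap (a + b - 1) p = p" if "p \<le> k" for p using that by (auto simp: adj_swap_def)
    then show ?thesis using cut_label_step[OF step.hyps(1-3)] True step.IH by simp
  qed
next
  case (next_row a)
  then show ?case using cut_label_next_row[OF next_row.hyps] \<open>k \<le> m\<close> by (metis le_trans)
qed

lemma subset_gamma_boxes_if_top_labels_gt:
  assumes large: "\<forall>x\<in>D. k < top_label x" and "k \<le> m"
  shows "D \<subseteq> gamma_boxes m k"
proof
  fix x assume x: "x \<in> D"
  obtain a b where x_eq: "x = (a, b)" and ab: "1 \<le> a" "1 \<le> b" "a + b \<le> m"
    using box_in_staircase x by (cases x) auto
  have "k < a + b - 1"
  proof (rule ccontr)
    assume "\<not> k < a + b - 1"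
    then have "top_label x = a + b - 1"
      using cut_label_small_fixed[OF _ \<open>k \<le> m\<close> ab(1,3)] large top_right_label_cut[OF ab(1,2)] ab x_eq
      by auto
    then show False using large x \<open>\<not> k < a + b - 1\<close> by auto
  qed
  then show "x \<in> gamma_boxes m k" using ab x_eq by (auto simp: gamma_boxes_def)
qed

lemma exit_label_small:
  assumes "D \<subseteq> gamma_boxes m k" "k \<le> m" "1 \<le> p" "p \<le> k"
  shows "L p 0 False = p"
proof -
  have "\<forall>x\<in>D. k + 2 \<le> fst x + snd x" using assms(1) by (auto simp: gamma_boxes_def)
  then show ?thesis
    using cut_label_small_fixed[of k m 0] cut_label_final[of p] m_pos assms(2-4) by auto
qed

end

text \<open>The values \<open>m + k + 1 - p\<close> are forced one by one, from \<open>p = k + 1\<close> up.\<close>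

lemma bij_betw_reversed_tail:
  fixes f :: "nat \<Rightarrow> nat"
  assumes bij: "bij_betw f {1..m} {1..m}"
    and lower: "\<And>p. k + 1 \<le> p \<Longrightarrow> p \<le> m \<Longrightarrow> m + k - p < f p"
  shows "k + 1 \<le> p \<Longrightarrow> p \<le> m \<Longrightarrow> f p = m + k + 1 - p"
proof (induction p rule: less_induct)
  case (less p)
  have "m + k - p < f p" using lower less.prems by simp
  then have lo: "m + k + 1 - p \<le> f p" by linarith
  have hi: "f p \<le> m" using bij less.prems unfolding bij_betw_def by auto
  show ?case
  proof (rule ccontr)
    assume ne: "f p \<noteq> m + k + 1 - p"
    define p' where "p' = m + k + 1 - f p"
    have p': "p' < p" "k + 1 \<le> p'" using lo hi ne less.prems by (auto simp: p'_def)
    have "f p' = f p" using less.IH[OF p'(1) p'(2)] p' less.prems lo hi by (simp add: p'_def)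
    moreover have "p' \<in> {1..m}" "p \<in> {1..m}" using p' less.prems by auto
    ultimately have "p' = p" using bij unfolding bij_betw_def inj_on_def by blast
    then show False using p' by simp
  qed
qed

lemma count_le_pi_nk_prefix:
  assumes "r \<le> n - k" "k \<le> n - k"
  shows "count_le (pi_nk_entry n k ` {1..r}) (n - r) \<le> k"
proof -
  have "{x \<in> pi_nk_entry n k ` {1..r}. x \<le> n - r} \<subseteq> {1..k}"
    using assms by (auto simp: pi_nk_entry_def)
  then show ?thesis unfolding count_le_def by (metis card_atLeastAtMost card_mono diff_Suc_1 finite_atLeastAtMost)
qed

lemma Gamma_diff_pd_of_triang:
  "T \<subseteq> Gamma n k \<Longrightarrow> k \<le> n \<Longrightarrow> Gamma n k - diag_of_box n ` pd_of_triang n k T = T"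
  using diag_box_image[of "Gamma n k - T" n k] by (auto simp: pd_of_triang_def)

lemma pd_of_triang_Gamma_diff:
  assumes "D \<subseteq> gamma_boxes (n - k) k" "k \<le> n"
  shows "pd_of_triang n k (Gamma n k - diag_of_box n ` D) = D"
proof -
  have "Gamma n k - (Gamma n k - diag_of_box n ` D) = diag_of_box n ` D"
    using box_diag_image[OF assms] by blast
  then show ?thesis unfolding pd_of_triang_def using box_diag_image[OF assms] by simp
qed

lemma gamma_boxes_diff_subset:
  assumes D: "D \<subseteq> gamma_boxes (n - k) k" and T': "Gamma n k - diag_of_box n ` D \<subseteq> T'"
    and "k \<le> n"
  shows "gamma_boxes (n - k) k - box_of n ` T' \<subseteq> D"
proof
  fix y assume y: "y \<in> gamma_boxes (n - k) k - box_of n ` T'"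
  have yG: "diag_of_box n y \<in> Gamma n k" "box_of n (diag_of_box n y) = y"
    using diag_of_gamma_box[of y n k] y \<open>k \<le> n\<close> by auto
  have "diag_of_box n y \<notin> T'" using y yG(2) by (metis DiffD2 image_eqI)
  then obtain d where d: "d \<in> D" "diag_of_box n y = diag_of_box n d" using yG(1) T' by blast
  have "box_of n (diag_of_box n d) = d" using diag_of_gamma_box[of d n k] d(1) D \<open>k \<le> n\<close> by auto
  then have "y = d" using d(2) yG(2) by metis
  then show "y \<in> D" using d(1) by simp
qed

context
  fixes n k :: nat
  assumes k_pos: "1 \<le> k" and n_ge: "2 * k + 1 \<le> n"
begin

lemma reduced_pd_for_pi_nkD:
  assumes r: "reduced_pd_for (n - k) (pi_nk n k) D"
  shows "pipe_dream (n - k) D"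
    and "\<forall>x\<in>D. pipe_dream.top_label (n - k) D x < pipe_dream.right_label (n - k) D x"
    and "\<forall>p\<in>{1..n - k}. pipe_label (n - k) D p 0 False = pi_nk_entry n k p"
    and "D \<subseteq> gamma_boxes (n - k) k"
proof -
  show pd: "pipe_dream (n - k) D"
    using r n_ge unfolding reduced_pd_for_def reduced_pd_def by unfold_locales auto
  interpret P: pipe_dream "n - k" D using pd .
  have reduced: "reduced_pd (n - k) D" using r by (simp add: reduced_pd_for_def)
  show ordered: "\<forall>x\<in>D. P.top_label x < P.right_label x"
    using reduced P.reduced_pd_iff_ordered by blast
  show exits: "\<forall>p\<in>{1..n - k}. P.L p 0 False = pi_nk_entry n k p"
    using r P.pd_perm_eq_pi_nk_iff[of n k] n_ge unfolding reduced_pd_for_def by simp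
  have "k < P.top_label x" if x: "x \<in> D" for x
  proof -
    obtain p p' where pp: "1 \<le> p" "p < p'" "p' \<le> n - k" "P.L p' 0 False < P.L p 0 False"
      "P.top_label x = P.L p' 0 False" "P.right_label x = P.L p 0 False"
      using P.crossing_exit_inversion[OF reduced x] unfolding P.exit_inversions_def by blast
    then have "k < p"
      using exits n_ge by (auto simp: pi_nk_entry_def split: if_splits)
    then show ?thesis using pp exits n_ge by (auto simp: pi_nk_entry_def)
  qed
  then show "D \<subseteq> gamma_boxes (n - k) k" using P.subset_gamma_boxes_if_top_labels_gt n_ge by auto
qed

text \<open>The greedy rank of the boxes outside a north-east chain is too large at the chain's first
  row, whereas for a reduced pipe dream for \<open>\<pi>\<^sub>n\<^sub>,\<^sub>k\<close> avoiding the chain it is the rank of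
  \<open>\<pi>\<^sub>n\<^sub>,\<^sub>k\<close> there, which is at most \<open>k\<close>.\<close>

lemma reduced_pd_for_pi_nk_crossing_free:
  assumes r: "reduced_pd_for (n - k) (pi_nk n k) D"
  shows "\<not> contains_crossing (k + 1) (Gamma n k - diag_of_box n ` D)"
proof
  assume "contains_crossing (k + 1) (Gamma n k - diag_of_box n ` D)"
  then obtain C where C: "is_crossing (k + 1) C" "C \<subseteq> Gamma n k - diag_of_box n ` D"
    unfolding contains_crossing_def by blast
  then obtain es where es: "length es = k + 1" "sorted_wrt north_east es" "set es = box_of n ` C"
    "fst (es ! 0) + snd (es ! k) \<le> n"
    using crossing_north_east_chain[of k C n] k_pos by blast
  note facts = reduced_pd_for_pi_nkD[OF r]
  interpret P: pipe_dream "n - k" D using facts(1) .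
  have "set es \<subseteq> gamma_boxes (n - k) k" using es(3) C(2) box_of_Gamma[of _ n k] n_ge by auto
  then interpret E: gamma_chain "n - k" k es using es n_ge by unfold_locales auto
  define r0 where "r0 = E.row 0"
  have r0: "1 \<le> r0" "r0 \<le> n - k" using E.chain_box[of 0] by (auto simp: r0_def)
  have "d \<notin> set es" if "d \<in> D" for d
  proof
    assume "d \<in> set es"
    then obtain c where c: "c \<in> C" "d = box_of n c" using es(3) by auto
    then have "diag_of_box n d = c" using box_of_Gamma[of c n k] C(2) n_ge by auto
    then show False using C(2) c \<open>d \<in> D\<close> by blast
  qed
  then have "D \<subseteq> E.U" using facts(4) by blast
  then have "greedy_rank (n - k) (n - r0) E.U r0 0 \<le> greedy_rank (n - k) (n - r0) D r0 0"
    using greedy_rank_antimono[OF E.U_staircase _ E.m_pos] r0 by simp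
  also have "\<dots> = int (P.cut_rank r0 0 (n - r0))"
    using P.cut_rank_eq_greedy_rank[OF P.D_staircase subset_refl facts(2)] r0 by simp
  also have "(\<lambda>r. P.L r 0 False) ` {1..r0} = pi_nk_entry n k ` {1..r0}"
    using facts(3) r0 by (intro image_cong) auto
  then have "P.cut_rank r0 0 (n - r0) = count_le (pi_nk_entry n k ` {1..r0}) (n - r0)"
    using P.cut_rank_exits[OF r0] by simp
  finally have "greedy_rank (n - k) (n - r0) E.U r0 0 \<le> int k"
    using count_le_pi_nk_prefix[OF r0(2)] n_ge by fastforce
  moreover have "int k + 1 \<le> greedy_rank (n - k) (n - r0) E.U r0 0"
    using E.greedy_rank_chain_ge es(4) n_ge by (simp add: r0_def E.row_def E.col_def)
  ultimately show False by simp
qed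

lemma greedy_rank_le_if_crossing_free:
  assumes E: "E \<subseteq> gamma_boxes (n - k) k"
    and free: "\<not> contains_crossing (k + 1) (diag_of_box n ` E)"
    and p: "k + 1 \<le> p" "p \<le> n - k"
  shows "greedy_rank (n - k) (n - p) (gamma_boxes (n - k) k - E) p 0 \<le> int k"
proof (rule ccontr)
  define U where "U = gamma_boxes (n - k) k - E"
  assume "\<not> greedy_rank (n - k) (n - p) (gamma_boxes (n - k) k - E) p 0 \<le> int k"
  then have big: "int k < greedy_rank (n - k) (n - p) U p 0" by (simp add: U_def)
  have "U \<subseteq> gamma_boxes (n - k) k" "gamma_boxes (n - k) k - U = E" using E by (auto simp: U_def)
  from greedy_rank_small_or_chain[OF this(1), of p 0 k "n - p"] this(2) p n_ge big
  obtain xs where xs: "length xs = k + 1" "set xs \<subseteq> E" "sorted_wrt north_east xs" "fst (hd xs) \<le> p"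
    "int (snd (last xs)) + greedy_rank (n - k) (n - p) U p 0 \<le> int (k + 1 + (n - p))"
    unfolding small_rank_or_chain_def by (auto simp: max_def split: if_splits)
  have "fst (hd xs) + snd (last xs) \<le> n" using xs(4,5) big p by simp
  then have "contains_crossing (k + 1) (diag_of_box n ` set xs)"
    using north_east_chain_crossing[OF xs(1,3)] xs(2) E n_ge by auto
  then show False using free contains_crossing_mono xs(2) by (metis image_mono)
qed

text \<open>The pipe of the greedy pipe dream exiting row \<open>p > k\<close> entered in a column \<open>> n - p\<close>:
  otherwise the rows \<open>1, \<dots>, p\<close> would contain \<open>k + 1\<close> exits with labels at most \<open>n - p\<close>.\<close>

lemma greedy_exit_label_gt:
  assumes E: "E \<subseteq> gamma_boxes (n - k) k"
    and free: "\<not> contains_crossing (k + 1) (diag_of_box n ` E)"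
    and p: "k + 1 \<le> p" "p \<le> n - k"
  shows "n - p < pipe_label (n - k) (greedy_pd (n - k) (gamma_boxes (n - k) k - E)) p 0 False"
proof (rule ccontr)
  define U where "U = gamma_boxes (n - k) k - E"
  define f where "f = (\<lambda>p. pipe_label (n - k) (greedy_pd (n - k) U) p 0 False)"
  have U: "U \<subseteq> staircase (n - k)" using gamma_boxes_subset_staircase by (auto simp: U_def)
  interpret G: pipe_dream "n - k" "greedy_pd (n - k) U" using pipe_dream_greedy_pd[OF U] n_ge by simp
  have bij: "bij_betw f {1..n - k} {1..n - k}" using G.bij_exit_label by (simp add: f_def)
  have "greedy_pd (n - k) U \<subseteq> gamma_boxes (n - k) k"
    using greedy_pd_subset[of "n - k" U] by (auto simp: U_def)
  then have small: "1 \<le> x \<Longrightarrow> x \<le> k \<Longrightarrow> f x = x" for x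
    using G.exit_label_small[of k x] n_ge by (simp add: f_def)
  assume "\<not> n - p < pipe_label (n - k) (greedy_pd (n - k) (gamma_boxes (n - k) k - E)) p 0 False"
  then have fp: "f p \<le> n - p" by (simp add: f_def U_def)
  have "f p \<notin> {1..k}"
  proof
    assume "f p \<in> {1..k}"
    then have "f (f p) = f p" using small by auto
    moreover have "f p \<in> {1..n - k}" "p \<in> {1..n - k}" using \<open>f p \<in> {1..k}\<close> p n_ge by auto
    ultimately show False using bij p \<open>f p \<in> {1..k}\<close> unfolding bij_betw_def inj_on_def by force
  qed
  moreover have "insert (f p) {1..k} \<subseteq> {x \<in> f ` {1..p}. x \<le> n - p}"
    using fp small p n_ge by (force intro: rev_image_eqI)
  ultimately have "k + 1 \<le> count_le (f ` {1..p}) (n - p)"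
    unfolding count_le_def using card_mono[of _ "insert (f p) {1..k}"] by fastforce
  moreover have "greedy_rank (n - k) (n - p) U p 0 = int (count_le (f ` {1..p}) (n - p))"
    using G.cut_rank_eq_greedy_rank[OF U greedy_pd_subset greedy_pd_ordered[OF U], of p 0 "n - p"]
      G.cut_rank_exits[of p "n - p"] p n_ge by (simp add: f_def)
  ultimately show False using greedy_rank_le_if_crossing_free[OF E free p] by (simp add: U_def)
qed

lemma greedy_pd_reduced_for_pi_nk:
  assumes E: "E \<subseteq> gamma_boxes (n - k) k"
    and free: "\<not> contains_crossing (k + 1) (diag_of_box n ` E)"
  shows "reduced_pd_for (n - k) (pi_nk n k) (greedy_pd (n - k) (gamma_boxes (n - k) k - E))"
proof -
  define m where "m = n - k"
  define U where "U = gamma_boxes m k - E"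
  have U: "U \<subseteq> staircase m" using gamma_boxes_subset_staircase by (auto simp: U_def)
  have m: "1 \<le> m" "k \<le> m" using k_pos n_ge by (auto simp: m_def)
  interpret G: pipe_dream m "greedy_pd m U" using pipe_dream_greedy_pd[OF U m(1)] .
  have "reduced_pd m (greedy_pd m U)"
    using G.reduced_pd_iff_ordered greedy_pd_ordered(1)[OF U m(1)] by blast
  moreover have "G.L p 0 False = pi_nk_entry n k p" if "p \<in> {1..m}" for p
  proof (cases "p \<le> k")
    case True
    have "greedy_pd m U \<subseteq> gamma_boxes m k" using greedy_pd_subset[of m U] by (auto simp: U_def)
    then show ?thesis using G.exit_label_small[of k p] True that m by (simp add: pi_nk_entry_def)
  next
    case False
    have "G.L p 0 False = m + k + 1 - p"
    proof (rule bij_betw_reversed_tail[OF G.bij_exit_label])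
      show "m + k - p' < G.L p' 0 False" if "k + 1 \<le> p'" "p' \<le> m" for p'
        using greedy_exit_label_gt[OF E free] that n_ge by (simp add: m_def U_def)
    qed (use False that in auto)
    then show ?thesis using False m n_ge by (simp add: pi_nk_entry_def m_def)
  qed
  then have "pd_perm m (greedy_pd m U) = pi_nk n k" using G.pd_perm_eq_pi_nk_iff m by (simp add: m_def)
  ultimately show ?thesis by (simp add: reduced_pd_for_def m_def U_def)
qed

lemma card_reduced_pd_for_pi_nk:
  assumes r: "reduced_pd_for (n - k) (pi_nk n k) D"
  shows "card D = card {(pi_nk_entry n k p', pi_nk_entry n k p) | p p'.
    1 \<le> p \<and> p < p' \<and> p' \<le> n - k \<and> pi_nk_entry n k p' < pi_nk_entry n k p}"
proof -
  note facts = reduced_pd_for_pi_nkD[OF r]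
  interpret P: pipe_dream "n - k" D using facts(1) .
  have "P.exit_inversions = {(pi_nk_entry n k p', pi_nk_entry n k p) | p p'.
    1 \<le> p \<and> p < p' \<and> p' \<le> n - k \<and> pi_nk_entry n k p' < pi_nk_entry n k p}"
    unfolding P.exit_inversions_def
  proof (intro Collect_cong ex_cong1 ex_cong)
    fix z p p'
    show "(z = (P.L p' 0 False, P.L p 0 False) \<and> 1 \<le> p \<and> p < p' \<and> p' \<le> n - k \<and>
            P.L p' 0 False < P.L p 0 False) \<longleftrightarrow>
          (z = (pi_nk_entry n k p', pi_nk_entry n k p) \<and> 1 \<le> p \<and> p < p' \<and> p' \<le> n - k \<and>
            pi_nk_entry n k p' < pi_nk_entry n k p)"
      using facts(3) by (cases "1 \<le> p \<and> p < p' \<and> p' \<le> n - k") auto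
  qed
  then show ?thesis
    using P.reduced_card_eq_exit_inversions r by (simp add: reduced_pd_for_def)
qed

lemma reduced_pd_for_pi_nk_subset_eq:
  assumes "reduced_pd_for (n - k) (pi_nk n k) D1" "reduced_pd_for (n - k) (pi_nk n k) D2"
    and "D1 \<subseteq> D2"
  shows "D1 = D2"
proof -
  interpret P: pipe_dream "n - k" D2 using reduced_pd_for_pi_nkD(1)[OF assms(2)] .
  show ?thesis
    using card_subset_eq[OF P.finite_D assms(3)] card_reduced_pd_for_pi_nk assms(1,2) by simp
qed

text \<open>A multitriangulation \<open>T\<close> is contained in the complement of the greedy pipe dream in the
  boxes of \<open>\<Gamma>\<^sub>n\<^sub>,\<^sub>k\<close> outside \<open>T\<close>, which is crossing free; by maximality the two agree.\<close>

lemma pd_of_k_triangulation: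
  assumes "k_triangulation n k T"
  shows "reduced_pd_for (n - k) (pi_nk n k) (pd_of_triang n k T)"
proof -
  have T: "T \<subseteq> Gamma n k" "\<not> contains_crossing (k + 1) T"
    and max: "\<And>T'. T \<subset> T' \<Longrightarrow> T' \<subseteq> Gamma n k \<Longrightarrow> contains_crossing (k + 1) T'"
    using assms by (auto simp: k_triangulation_def)
  define E where "E = box_of n ` T"
  define D where "D = greedy_pd (n - k) (gamma_boxes (n - k) k - E)"
  have E: "E \<subseteq> gamma_boxes (n - k) k" "diag_of_box n ` E = T"
    using diag_box_image[OF T(1)] n_ge by (auto simp: E_def)
  have r: "reduced_pd_for (n - k) (pi_nk n k) D"
    using greedy_pd_reduced_for_pi_nk[OF E(1)] T(2) E(2) by (simp add: D_def)
  have D: "D \<subseteq> gamma_boxes (n - k) k - E" using greedy_pd_subset by (simp add: D_def)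
  have "T \<subseteq> Gamma n k - diag_of_box n ` D"
  proof
    fix t assume t: "t \<in> T"
    have "t \<notin> diag_of_box n ` D"
    proof
      assume "t \<in> diag_of_box n ` D"
      then obtain d where "d \<in> D" "t = diag_of_box n d" by blast
      then have "d \<in> E" using t D diag_of_gamma_box[of d n k] n_ge by (force simp: E_def)
      then show False using \<open>d \<in> D\<close> D by blast
    qed
    then show "t \<in> Gamma n k - diag_of_box n ` D" using t T(1) by blast
  qed
  then have "Gamma n k - diag_of_box n ` D = T"
    using max reduced_pd_for_pi_nk_crossing_free[OF r] by blast
  then have "pd_of_triang n k T = D" using pd_of_triang_Gamma_diff[of D n k] D n_ge by auto
  then show ?thesis using r by simp
qed

text \<open>If the complement of a reduced pipe dream \<open>D\<close> for \<open>\<pi>\<^sub>n\<^sub>,\<^sub>k\<close> were not maximal, the greedy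
  pipe dream of a larger crossing free set would be a reduced pipe dream for \<open>\<pi>\<^sub>n\<^sub>,\<^sub>k\<close>
  strictly inside \<open>D\<close>.\<close>

lemma k_triangulation_of_pd:
  assumes r: "reduced_pd_for (n - k) (pi_nk n k) D"
  shows "k_triangulation n k (Gamma n k - diag_of_box n ` D)"
proof -
  define T where "T = Gamma n k - diag_of_box n ` D"
  have D: "D \<subseteq> gamma_boxes (n - k) k" using reduced_pd_for_pi_nkD(4)[OF r] .
  have "contains_crossing (k + 1) T'" if T': "T \<subset> T'" "T' \<subseteq> Gamma n k" for T'
  proof (rule ccontr)
    assume free: "\<not> contains_crossing (k + 1) T'"
    define E where "E = box_of n ` T'"
    define D' where "D' = greedy_pd (n - k) (gamma_boxes (n - k) k - E)"
    have E: "E \<subseteq> gamma_boxes (n - k) k" "diag_of_box n ` E = T'"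
      using diag_box_image[OF T'(2)] n_ge by (auto simp: E_def)
    have r': "reduced_pd_for (n - k) (pi_nk n k) D'"
      using greedy_pd_reduced_for_pi_nk[OF E(1)] free E(2) by (simp add: D'_def)
    have D': "D' \<subseteq> gamma_boxes (n - k) k - E" using greedy_pd_subset by (simp add: D'_def)
    have "Gamma n k - diag_of_box n ` D \<subseteq> T'" using T'(1) unfolding T_def by blast
    then have "gamma_boxes (n - k) k - E \<subseteq> D"
      using gamma_boxes_diff_subset[OF D] n_ge by (simp add: E_def)
    then have "D' \<subseteq> D" using D' by blast
    then have "D' = D" using reduced_pd_for_pi_nk_subset_eq[OF r' r] by blast
    obtain t where t: "t \<in> T'" "t \<notin> T" using T'(1) by blast
    then obtain d where "d \<in> D" "t = diag_of_box n d" using T'(2) by (auto simp: T_def)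
    moreover have "box_of n t \<in> E" using t by (simp add: E_def)
    ultimately have "d \<in> E" using D diag_of_gamma_box[of d n k] n_ge by auto
    then show False using \<open>d \<in> D\<close> \<open>D' = D\<close> D' by blast
  qed
  moreover have "\<not> contains_crossing (k + 1) T"
    using reduced_pd_for_pi_nk_crossing_free[OF r] by (simp add: T_def)
  moreover have "T \<subseteq> Gamma n k" by (simp add: T_def)
  ultimately show ?thesis unfolding k_triangulation_def T_def[symmetric] by blast
qed

end

theorem theorem3p2:
  fixes n k :: nat
  assumes "1 \<le> k" and "2 * k + 1 \<le> n"
  shows "bij_betw (pd_of_triang n k) {T. k_triangulation n k T}
           {D. reduced_pd_for (n - k) (pi_nk n k) D}"
proof (rule bij_betw_byWitness[where f' = "\<lambda>D. Gamma n k - diag_of_box n ` D"])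
  show "\<forall>T\<in>{T. k_triangulation n k T}. Gamma n k - diag_of_box n ` pd_of_triang n k T = T"
    using Gamma_diff_pd_of_triang assms(2) by (simp add: k_triangulation_def)
  show "\<forall>D\<in>{D. reduced_pd_for (n - k) (pi_nk n k) D}.
          pd_of_triang n k (Gamma n k - diag_of_box n ` D) = D"
    using pd_of_triang_Gamma_diff reduced_pd_for_pi_nkD(4)[OF assms] assms(2) by simp
  show "pd_of_triang n k ` {T. k_triangulation n k T} \<subseteq> {D. reduced_pd_for (n - k) (pi_nk n k) D}"
    using pd_of_k_triangulation[OF assms] by blast
  show "(\<lambda>D. Gamma n k - diag_of_box n ` D) ` {D. reduced_pd_for (n - k) (pi_nk n k) D}
          \<subseteq> {T. k_triangulation n k T}"
    using k_triangulation_of_pd[OF assms] by blast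
qed

end
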